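(* Let $0<\mu<\lambda_{\min}(A)$ and $\ell\ge1$, and assume that $R_0,\dots,R_{\ell-1}$ (from BCG) have full column rank. For $k=0,\dots,\ell-1$ put $\Upsilon^{(\mu)}_k=\Phi_k^{-1}(\Delta^{(\mu)}_{k+1})^{-1}\Phi_k$ and $\Theta^{(\mu)}_k=(R_k^TR_k)\Upsilon^{(\mu)}_k$. Then for every $k=0,\dots,\ell-1$ the matrices $\Delta^{(\mu)}_{k+1}$ and $\Theta^{(\mu)}_k-\Theta_k$ are symmetric positive definite.
   Context: Let $A\in\mathbb{R}^{n\times n}$ be symmetric positive definite, let $B,X_0\in\mathbb{R}^{n\times m}$, and let $X=A^{-1}B$. The block conjugate gradient (BCG) algorithm sets $R_0=B-AX_0$, $P_0=R_0$, and for $k=1,2,\dots$: $\Upsilon_{k-1}=(P_{k-1}^TAP_{k-1})^{-1}(R_{k-1}^TR_{k-1})$, $X_k=X_{k-1}+P_{k-1}\Upsilon_{k-1}$, $R_k=R_{k-1}-AP_{k-1}\Upsilon_{k-1}$, $\Xi_k=(R_{k-1}^TR_{k-1})^{-1}(R_k^TR_k)$, $P_k=R_k+P_{k-1}\Xi_k$. Define $\mathfrak{E}_k=(X-X_k)^TA(X-X_k)$ and $\Theta_k=(R_k^TR_k)\Upsilon_k$. The block Lanczos algorithm below is started from the same $R_0=B-AX_0$. Let $A\in\mathbb{R}^{n\times n}$ be symmetric positive definite and $R_0\in\mathbb{R}^{n\times m}$ of full column rank. The block Lanczos algorithm started from $R_0$ is: $V_0=0$; $V_1\Gamma_0=R_0$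 is a QR factorization ($V_1\in\mathbb{R}^{n\times m}$ with orthonormal columns, $\Gamma_0\in\mathbb{R}^{m\times m}$ upper triangular); for $k=1,2,\dots$: $W=AV_k-V_{k-1}\Gamma_{k-1}^T$, $\Omega_k=V_k^TW$, and $V_{k+1}\Gamma_k=W-V_k\Omega_k$ is a QR factorization. It is assumed that for all indices considered the block Krylov subspace $\mathrm{colspan}\{R_0,AR_0,\dots,A^{j-1}R_0\}$ has dimension $jm$, so that every $\Gamma_j$ is nonsingular and $V_i^TV_j=\delta_{ij}I_m$. Put $\mathcal V_k=(V_1,\dots,V_k)\in\mathbb{R}^{n\times km}$ and let $T_k\in\mathbb{R}^{km\times km}$ be the symmetric block tridiagonal matrix with diagonal blocks $\Omega_1,\dots,\Omega_k$, subdiagonal blocks $\Gamma_1,\dots,\Gamma_{k-1}$ and superdiagonal blocks $\Gamma_1^T,\dots,\Gamma_{k-1}^T$; one has $A\mathcal V_k=\mathcal V_kT_k+V_{k+1}\Gamma_kE_k^T$ and $T_k=\mathcal V_k^TA\mathcal V_k$ is symmetric positive definite. Define $\Delta_1=\Omega_1$, $\Delta_j=\Omega_j-\Gamma_{j-1}\Delta_{j-1}^{-1}\Gamma_{j-1}^T$ ($j\ge2$) (the diagonal blocks of the block $LDL^T$-type factorization of $T_k$; they are symmetric positive definite), $\Pi_j=\Gamma_j\Delta_j^{-1}$, $\Phi_0=\Gamma_0$ and $\Phi_j=\Pi_j\Phi_{j-1}$. Let $E_j=e_j\otimes I_m\in\mathbb{R}^{km\times m}$; for $M\in\mathbb{R}^{km\times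 km}$, $[M]_{i,j}$ denotes its $(i,j)$ block of size $m\times m$, and for $Y\in\mathbb{R}^{km\times m}$, $[Y]_j$ denotes its $j$th $m\times m$ block. Shifted quantities: for $\mu\in\mathbb{R}$ let $\overline\Delta^{(\mu)}_1=\Omega_1-\mu I_m$ and $\overline\Delta^{(\mu)}_{j+1}=\Omega_{j+1}-\mu I_m-\Gamma_j(\overline\Delta^{(\mu)}_j)^{-1}\Gamma_j^T$ (the diagonal blocks of the analogous factorization of $T_k-\mu I$). For $k\ge1$ let $\Omega^{(\mu)}_{k+1}=\mu I_m+\Gamma_k[(T_k-\mu I)^{-1}]_{k,k}\Gamma_k^T$ and let $T^{(\mu)}_{k+1}$ be $T_{k+1}$ with its last diagonal block $\Omega_{k+1}$ replaced by $\Omega^{(\mu)}_{k+1}$. Put $\Delta^{(\mu)}_1=\mu I_m$ and, for $k\ge1$, $\Delta^{(\mu)}_{k+1}=\Omega^{(\mu)}_{k+1}-\Gamma_k\Delta_k^{-1}\Gamma_k^T$ (the last diagonal block of the factorization of $T^{(\mu)}_{k+1}$). $\lambda_{\min}(A)$ denotes the smallest eigenvalue of $A$. *)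

theory Defs
  imports "Jordan_Normal_Form.Matrix" "Jordan_Normal_Form.Char_Poly"
          "Jordan_Normal_Form.Gauss_Jordan_Elimination"
begin

text \<open>Inverse of a (square, invertible) matrix; the zero matrix is returned for singular
  input, which never happens in the situations considered below.\<close>
definition minv :: "real mat \<Rightarrow> real mat" where
  "minv M = (case mat_inverse M of Some N \<Rightarrow> N | None \<Rightarrow> 0\<^sub>m (dim_row M) (dim_col M))"

definition spd :: "nat \<Rightarrow> real mat \<Rightarrow> bool" where
  "spd d M \<longleftrightarrow> M \<in> carrier_mat d d \<and> M\<^sup>T = M \<and>
     (\<forall>x \<in> carrier_vec d. x \<noteq> 0\<^sub>v d \<longrightarrow> x \<bullet> (M *\<^sub>v x) > 0)"

definition full_col_rank :: "real mat \<Rightarrow> bool" where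
  "full_col_rank M \<longleftrightarrow> (\<forall>x \<in> carrier_vec (dim_col M). M *\<^sub>v x = 0\<^sub>v (dim_row M) \<longrightarrow> x = 0\<^sub>v (dim_col M))"

definition lambda_min :: "real mat \<Rightarrow> real" where
  "lambda_min A = Min {ev. eigenvalue A ev}"

definition is_QR :: "nat \<Rightarrow> nat \<Rightarrow> real mat \<Rightarrow> real mat \<Rightarrow> real mat \<Rightarrow> bool" where
  "is_QR n m M Q R \<longleftrightarrow> Q \<in> carrier_mat n m \<and> R \<in> carrier_mat m m \<and>
     Q\<^sup>T * Q = 1\<^sub>m m \<and> upper_triangular R \<and> Q * R = M"

text \<open>Block Krylov matrix (R0, A R0, ..., A^(j-1) R0).\<close>
definition krylov_mat :: "nat \<Rightarrow> nat \<Rightarrow> real mat \<Rightarrow> real mat \<Rightarrow> nat \<Rightarrow> real mat" where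
  "krylov_mat n m A R0 j = mat n (j * m) (\<lambda>(r, c). ((A ^\<^sub>m (c div m)) * R0) $$ (r, c mod m))"

primrec bcg :: "real mat \<Rightarrow> real mat \<Rightarrow> real mat \<Rightarrow> nat \<Rightarrow> real mat \<times> real mat \<times> real mat" where
  "bcg A B X0 0 = (X0, B - A * X0, B - A * X0)"
| "bcg A B X0 (Suc k) =
     (let (X, R, P) = bcg A B X0 k;
          Ups = minv (P\<^sup>T * A * P) * (R\<^sup>T * R);
          X' = X + P * Ups;
          R' = R - A * P * Ups;
          Xi = minv (R\<^sup>T * R) * (R'\<^sup>T * R');
          P' = R' + P * Xi
      in (X', R', P'))"

definition bcgX where "bcgX A B X0 k = fst (bcg A B X0 k)"
definition bcgR where "bcgR A B X0 k = fst (snd (bcg A B X0 k))"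
definition bcgP where "bcgP A B X0 k = snd (snd (bcg A B X0 k))"

definition bcgUps where
  "bcgUps A B X0 k = minv ((bcgP A B X0 k)\<^sup>T * A * bcgP A B X0 k) *
                      ((bcgR A B X0 k)\<^sup>T * bcgR A B X0 k)"

definition bcgTheta where
  "bcgTheta A B X0 k = ((bcgR A B X0 k)\<^sup>T * bcgR A B X0 k) * bcgUps A B X0 k"

definition lanczos :: "nat \<Rightarrow> nat \<Rightarrow> real mat \<Rightarrow> real mat \<Rightarrow> nat \<Rightarrow>
    (nat \<Rightarrow> real mat) \<Rightarrow> (nat \<Rightarrow> real mat) \<Rightarrow> (nat \<Rightarrow> real mat) \<Rightarrow> bool" where
  "lanczos n m A R0 l V Gam Om \<longleftrightarrow>
     V 0 = 0\<^sub>m n m \<and> is_QR n m R0 (V 1) (Gam 0) \<and>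
     (\<forall>k. 1 \<le> k \<and> k < l \<longrightarrow>
        (let W = A * V k - V (k - 1) * (Gam (k - 1))\<^sup>T in
           Om k = (V k)\<^sup>T * W \<and> is_QR n m (W - V k * Om k) (V (k + 1)) (Gam k)))"

text \<open>T_k: symmetric block tridiagonal (k m) x (k m) matrix; diagonal blocks Om 1..Om k,
  block (i+1,i) = Gam i, block (i,i+1) = Gam i ^T (blocks indexed from 1).\<close>
definition Tmat :: "nat \<Rightarrow> (nat \<Rightarrow> real mat) \<Rightarrow> (nat \<Rightarrow> real mat) \<Rightarrow> nat \<Rightarrow> real mat" where
  "Tmat m Gam Om k = mat (k * m) (k * m) (\<lambda>(i, j).
     let bi = i div m + 1; bj = j div m + 1; r = i mod m; c = j mod m in
     if bi = bj then Om bi $$ (r, c)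
     else if bi = bj + 1 then Gam bj $$ (r, c)
     else if bj = bi + 1 then (Gam bi)\<^sup>T $$ (r, c)
     else 0)"

text \<open>[M]_{i,j}: the (i,j) block of size m x m (blocks indexed from 1).\<close>
definition blk :: "nat \<Rightarrow> real mat \<Rightarrow> nat \<Rightarrow> nat \<Rightarrow> real mat" where
  "blk m M i j = mat m m (\<lambda>(r, c). M $$ ((i - 1) * m + r, (j - 1) * m + c))"

primrec Delta :: "(nat \<Rightarrow> real mat) \<Rightarrow> (nat \<Rightarrow> real mat) \<Rightarrow> nat \<Rightarrow> real mat" where
  "Delta Gam Om 0 = Om 0"  (* unused *)
| "Delta Gam Om (Suc j) = (if j = 0 then Om 1
     else Om (Suc j) - Gam j * minv (Delta Gam Om j) * (Gam j)\<^sup>T)"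

primrec Phi :: "(nat \<Rightarrow> real mat) \<Rightarrow> (nat \<Rightarrow> real mat) \<Rightarrow> nat \<Rightarrow> real mat" where
  "Phi Gam Om 0 = Gam 0"
| "Phi Gam Om (Suc j) = (Gam (Suc j) * minv (Delta Gam Om (Suc j))) * Phi Gam Om j"

text \<open>Om^(mu)_{k+1} for k >= 1.\<close>
definition Om_mu :: "nat \<Rightarrow> (nat \<Rightarrow> real mat) \<Rightarrow> (nat \<Rightarrow> real mat) \<Rightarrow> real \<Rightarrow> nat \<Rightarrow> real mat" where
  "Om_mu m Gam Om \<mu> k = \<mu> \<cdot>\<^sub>m 1\<^sub>m m +
     Gam k * blk m (minv (Tmat m Gam Om k - \<mu> \<cdot>\<^sub>m 1\<^sub>m (k * m))) k k * (Gam k)\<^sup>T"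

text \<open>Delta_mu m Gam Om mu k = Delta^(mu)_{k+1}.\<close>
definition Delta_mu :: "nat \<Rightarrow> (nat \<Rightarrow> real mat) \<Rightarrow> (nat \<Rightarrow> real mat) \<Rightarrow> real \<Rightarrow> nat \<Rightarrow> real mat" where
  "Delta_mu m Gam Om \<mu> k = (if k = 0 then \<mu> \<cdot>\<^sub>m 1\<^sub>m m
     else Om_mu m Gam Om \<mu> k - Gam k * minv (Delta Gam Om k) * (Gam k)\<^sup>T)"

definition Ups_mu where
  "Ups_mu m Gam Om \<mu> k = minv (Phi Gam Om k) * minv (Delta_mu m Gam Om \<mu> k) * Phi Gam Om k"

definition Theta_mu where
  "Theta_mu A B X0 m Gam Om \<mu> k =
     ((bcgR A B X0 k)\<^sup>T * bcgR A B X0 k) * Ups_mu m Gam Om \<mu> k"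

end

theory Submission
  imports Defs
begin

text \<open>
  Write \<open>D_j\<close> for the pivots \<open>\<Delta>_j\<close> of the block \<open>LDL\<^sup>T\<close> factorization of \<open>T_k\<close> and
  \<open>Z_0 = V_1\<close>, \<open>Z_k = V_{k+1} - Z_{k-1} D_k\<^sup>-\<^sup>1 \<Gamma>_k\<^sup>T\<close> for the block search directions, so
  that \<open>Z_k\<^sup>T A Z_k = D_{k+1}\<close>. Following the BCG recursion one shows by induction that
  \<open>R_k = V_{k+1} \<Psi>_k\<close> and \<open>P_k = Z_k \<Psi>_k\<close> with \<open>\<Psi>_k = (-1)\<^sup>k \<Phi>_k\<close>; the full column rank of
  \<open>R_{k+1}\<close> forces \<open>\<Psi>_{k+1} = -\<Gamma>_{k+1} D_{k+1}\<^sup>-\<^sup>1 \<Psi>_k\<close>, hence \<open>\<Gamma>_{k+1}\<close>, to be nonsingular, and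
  this is what keeps the Lanczos blocks orthonormal. It follows that \<open>\<Theta>_k = \<Psi>_k\<^sup>T D_{k+1}\<^sup>-\<^sup>1 \<Psi>_k\<close>
  and \<open>\<Theta>\<^sup>\<mu>_k = \<Psi>_k\<^sup>T (\<Delta>\<^sup>\<mu>_{k+1})\<^sup>-\<^sup>1 \<Psi>_k\<close>, so it suffices that \<open>X = \<Delta>\<^sup>\<mu>_{k+1}\<close> and
  \<open>S = D_{k+1} - \<Delta>\<^sup>\<mu>_{k+1}\<close> are positive definite: then so is \<open>X\<^sup>-\<^sup>1 - (X + S)\<^sup>-\<^sup>1\<close>.

  Both facts come from the positive definiteness of \<open>A - \<mu>I\<close>, i.e. from \<open>\<mu> < \<lambda>_min(A)\<close>.
  Its compression \<open>H = T_k - \<mu>I\<close> to the Lanczos basis \<open>\<V>_k\<close> is positive definite, and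
  \<open>\<Delta>\<^sup>\<mu>_{k+1} = \<mu>I + \<Gamma>_k ([H\<^sup>-\<^sup>1]_{k,k} - D_k\<^sup>-\<^sup>1) \<Gamma>_k\<^sup>T\<close>. The variational inequality
  \<open>b\<^sup>T H\<^sup>-\<^sup>1 b \<ge> 2 c\<^sup>T b - c\<^sup>T H c\<close>, with \<open>c\<close> the coordinates of \<open>Z_{k-1} D_k\<^sup>-\<^sup>1 z\<close> in \<open>\<V>_k\<close>,
  gives \<open>[H\<^sup>-\<^sup>1]_{k,k} \<ge> D_k\<^sup>-\<^sup>1\<close>, whence \<open>\<Delta>\<^sup>\<mu>_{k+1} \<ge> \<mu>I\<close>. And the quadratic form of \<open>S\<close> at
  \<open>y\<close> is the quadratic form of \<open>A - \<mu>I\<close> at the nonzero vector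
  \<open>V_{k+1} y - \<V>_k H\<^sup>-\<^sup>1 E_k \<Gamma>_k\<^sup>T y\<close>.
\<close>

section \<open>Matrix algebra\<close>

lemma assoc_mult_mat':
  fixes A B C :: "'a::semiring_0 mat"
  shows "dim_col A = dim_row B \<Longrightarrow> dim_col B = dim_row C \<Longrightarrow> A * B * C = A * (B * C)"
  by (rule assoc_mult_mat[of A "dim_row A" "dim_col A" B "dim_col B" C "dim_col C"]) auto

lemma mult_smult_distrib':
  fixes A B :: "'a::comm_semiring_0 mat"
  shows "dim_col A = dim_row B \<Longrightarrow> A * (k \<cdot>\<^sub>m B) = k \<cdot>\<^sub>m (A * B)"
  by (rule mult_smult_distrib[of A "dim_row A" "dim_col A" B "dim_col B"]) auto

lemma mult_smult_assoc_mat':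
  fixes A B :: "'a::comm_semiring_0 mat"
  shows "dim_col A = dim_row B \<Longrightarrow> (k \<cdot>\<^sub>m A) * B = k \<cdot>\<^sub>m (A * B)"
  by (rule mult_smult_assoc_mat[of A "dim_row A" "dim_col A" B "dim_col B"]) auto

lemma mult_add_distrib_mat':
  fixes A B C :: "'a::semiring_0 mat"
  shows "dim_col A = dim_row B \<Longrightarrow> dim_row C = dim_row B \<Longrightarrow> dim_col C = dim_col B \<Longrightarrow>
    A * (B + C) = A * B + A * C"
  by (rule mult_add_distrib_mat[of A "dim_row A" "dim_col A" B "dim_col B"]) auto

lemma add_mult_distrib_mat':
  fixes A B C :: "'a::semiring_0 mat"
  shows "dim_col A = dim_row C \<Longrightarrow> dim_row B = dim_row A \<Longrightarrow> dim_col B = dim_col A \<Longrightarrow>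
    (A + B) * C = A * C + B * C"
  by (rule add_mult_distrib_mat[of A "dim_row A" "dim_col A" B C "dim_col C"]) auto

lemma mult_minus_distrib_mat':
  fixes A B C :: "'a::ring mat"
  shows "dim_col A = dim_row B \<Longrightarrow> dim_row C = dim_row B \<Longrightarrow> dim_col C = dim_col B \<Longrightarrow>
    A * (B - C) = A * B - A * C"
  by (rule mult_minus_distrib_mat[of A "dim_row A" "dim_col A" B "dim_col B"]) auto

lemma minus_mult_distrib_mat':
  fixes A B C :: "'a::ring mat"
  shows "dim_col A = dim_row C \<Longrightarrow> dim_row B = dim_row A \<Longrightarrow> dim_col B = dim_col A \<Longrightarrow>
    (A - B) * C = A * C - B * C"
  by (rule minus_mult_distrib_mat[of A "dim_row A" "dim_col A" B C "dim_col C"]) auto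

lemma transpose_mult':
  fixes A B :: "'a::comm_semiring_0 mat"
  shows "dim_col A = dim_row B \<Longrightarrow> (A * B)\<^sup>T = B\<^sup>T * A\<^sup>T"
  by (rule transpose_mult[of A "dim_row A" "dim_col A" B "dim_col B"]) auto

lemma transpose_add':
  fixes A B :: "'a::plus mat"
  shows "dim_row A = dim_row B \<Longrightarrow> dim_col A = dim_col B \<Longrightarrow> (A + B)\<^sup>T = A\<^sup>T + B\<^sup>T"
  by (rule transpose_add[of A "dim_row A" "dim_col A"]) auto

lemma transpose_minus':
  fixes A B :: "'a::minus mat"
  shows "dim_row A = dim_row B \<Longrightarrow> dim_col A = dim_col B \<Longrightarrow> (A - B)\<^sup>T = A\<^sup>T - B\<^sup>T"
  by (rule transpose_minus[of A "dim_row A" "dim_col A"]) auto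

lemma transpose_smult_mat: "(k \<cdot>\<^sub>m A)\<^sup>T = k \<cdot>\<^sub>m A\<^sup>T"
  by (rule eq_matI) auto

lemmas mat_distrib_dims =
  mult_add_distrib_mat' add_mult_distrib_mat' mult_minus_distrib_mat' minus_mult_distrib_mat'
  transpose_mult' transpose_add' transpose_minus' mult_smult_distrib' mult_smult_assoc_mat'
  transpose_smult_mat

lemma minus_carrier_mat'[simp]:
  "A \<in> carrier_mat nr nc \<Longrightarrow> B \<in> carrier_mat nr nc \<Longrightarrow> A - B \<in> carrier_mat nr nc"
  by (rule minus_carrier_mat)

lemma right_minus_zero_mat': "dim_row A = a \<Longrightarrow> dim_col A = b \<Longrightarrow> A - 0\<^sub>m a b = (A :: 'a::group_add mat)"
  by (intro eq_matI) auto

lemma right_add_zero_mat': "dim_row A = a \<Longrightarrow> dim_col A = b \<Longrightarrow> A + 0\<^sub>m a b = (A :: 'a::monoid_add mat)"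
  by (intro eq_matI) auto

lemma left_add_zero_mat': "dim_row A = a \<Longrightarrow> dim_col A = b \<Longrightarrow> 0\<^sub>m a b + A = (A :: 'a::monoid_add mat)"
  by (intro eq_matI) auto

lemma add_add_minus_add_mat:
  fixes a b c d :: "real mat"
  assumes "a \<in> carrier_mat p q" "b \<in> carrier_mat p q" "c \<in> carrier_mat p q" "d \<in> carrier_mat p q"
  shows "a + b + c - (a + d) = b - d + c"
  using assms by (intro eq_matI) auto

lemma minus_add_smult_mat:
  fixes a b :: "real mat"
  assumes "a \<in> carrier_mat p q" "b \<in> carrier_mat p q"
  shows "a - (a + b) = (-1) \<cdot>\<^sub>m b" "a + (-1) \<cdot>\<^sub>m b = a - b"
  using assms by (auto intro!: eq_matI)

lemma assoc_mult_mat_subst: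
  fixes A B C D :: "'a::semiring_0 mat"
  shows "dim_col A = dim_row B \<Longrightarrow> dim_col B = dim_row C \<Longrightarrow> A * B = D \<Longrightarrow> A * (B * C) = D * C"
  using assoc_mult_mat'[of A B C] by simp

lemma right_inverse_cancel:
  fixes A B C :: "'a::semiring_1 mat"
  assumes "A * B = 1\<^sub>m n" "dim_col A = dim_row B" "dim_col B = dim_row C" "dim_row C = n"
  shows "A * (B * C) = C"
proof -
  have "A * (B * C) = (A * B) * C" by (rule assoc_mult_mat'[symmetric]) (use assms in auto)
  thus ?thesis using assms by (simp add: left_mult_one_mat')
qed

lemma minv_carrier: assumes "M \<in> carrier_mat p p" shows "minv M \<in> carrier_mat p p"
proof (cases "mat_inverse M")
  case None thus ?thesis unfolding minv_def using assms by simp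
next
  case (Some N) thus ?thesis unfolding minv_def using mat_inverse(2)[OF assms Some] by simp
qed

lemma minv_inverse:
  assumes A: "A \<in> carrier_mat n n" and d: "det A \<noteq> 0"
  shows "minv A \<in> carrier_mat n n" "A * minv A = 1\<^sub>m n" "minv A * A = 1\<^sub>m n"
proof -
  have U: "A \<in> Units (ring_mat TYPE(real) n undefined)"
    by (rule det_non_zero_imp_unit[OF A d])
  obtain B where B: "mat_inverse A = Some B"
    using mat_inverse(1)[OF A, where b=undefined] U by (cases "mat_inverse A") auto
  from mat_inverse(2)[OF A B] have "A * B = 1\<^sub>m n \<and> B * A = 1\<^sub>m n \<and> B \<in> carrier_mat n n" .
  moreover have "minv A = B" unfolding minv_def B by simp
  ultimately show "minv A \<in> carrier_mat n n" "A * minv A = 1\<^sub>m n" "minv A * A = 1\<^sub>m n" by auto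
qed

lemma minv_cancel:
  assumes A: "A \<in> carrier_mat n n" and d: "det A \<noteq> 0" and C: "dim_row C = n"
  shows "A * (minv A * C) = C" "minv A * (A * C) = C"
  using minv_inverse[OF A d] A C by (auto intro: right_inverse_cancel)

lemma det_nonzero_if_right_inverse:
  assumes A: "A \<in> carrier_mat n n" and B: "B \<in> carrier_mat n n" and AB: "A * B = 1\<^sub>m n"
  shows "det (A::real mat) \<noteq> 0"
proof
  assume "det A = 0"
  hence "det (A * B) = 0" using det_mult[OF A B] by simp
  thus False using AB by simp
qed

lemma minv_unique:
  assumes A: "A \<in> carrier_mat n n" and B: "B \<in> carrier_mat n n" and AB: "A * B = 1\<^sub>m n"
  shows "minv A = B"
proof -
  have d: "det A \<noteq> 0" by (rule det_nonzero_if_right_inverse[OF A B AB])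
  note I = minv_inverse[OF A d]
  have "minv A = minv A * (A * B)" using AB I(1) by simp
  also have "\<dots> = (minv A * A) * B" using I(1) A B by simp
  also have "\<dots> = B" using I(3) B by simp
  finally show ?thesis .
qed

lemma det_mult_nonzero:
  assumes "A \<in> carrier_mat n n" "B \<in> carrier_mat n n" "det A \<noteq> 0" "det (B::real mat) \<noteq> 0"
  shows "det (A * B) \<noteq> 0"
  using det_mult[OF assms(1,2)] assms by simp

lemma minv_mult:
  assumes A: "A \<in> carrier_mat n n" and B: "B \<in> carrier_mat n n"
    and dA: "det A \<noteq> 0" and dB: "det B \<noteq> 0"
  shows "minv (A * B) = minv B * minv A"
proof (rule minv_unique[of _ n])
  note IA = minv_inverse[OF A dA] and IB = minv_inverse[OF B dB]
  show "A * B \<in> carrier_mat n n" using A B by simp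
  show "minv B * minv A \<in> carrier_mat n n" using IA IB by simp
  have "A * B * (minv B * minv A) = A * ((B * minv B) * minv A)"
    using A B IA(1) IB(1) by (simp add: assoc_mult_mat')
  also have "\<dots> = 1\<^sub>m n" using IA IB A by simp
  finally show "A * B * (minv B * minv A) = 1\<^sub>m n" .
qed

lemma minv_transpose:
  assumes A: "A \<in> carrier_mat n n" and dA: "det A \<noteq> 0"
  shows "minv (A\<^sup>T) = (minv A)\<^sup>T"
proof (rule minv_unique[of _ n])
  note IA = minv_inverse[OF A dA]
  show "A\<^sup>T \<in> carrier_mat n n" "(minv A)\<^sup>T \<in> carrier_mat n n" using A IA by auto
  have "A\<^sup>T * (minv A)\<^sup>T = (minv A * A)\<^sup>T" using transpose_mult[OF IA(1) A] by simp
  thus "A\<^sup>T * (minv A)\<^sup>T = 1\<^sub>m n" using IA by simp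
qed

lemma minv_symmetric:
  assumes A: "A \<in> carrier_mat n n" and dA: "det A \<noteq> 0" and s: "A\<^sup>T = A"
  shows "(minv A)\<^sup>T = minv A"
  using minv_transpose[OF A dA] s by simp

lemma minv_transpose_cancel:
  assumes P: "P \<in> carrier_mat p p" and d: "det P \<noteq> 0" and X: "dim_row X = p"
  shows "(minv P)\<^sup>T * (P\<^sup>T * X) = X"
proof -
  have "det (P\<^sup>T) \<noteq> 0" using det_transpose[OF P] d by simp
  from minv_cancel(2)[OF _ this, where C = X] show ?thesis using P X minv_transpose[OF P d] by simp
qed

lemma minv_smult:
  assumes A: "A \<in> carrier_mat n n" and dA: "det A \<noteq> 0" and c: "c \<noteq> (0::real)"
  shows "minv (c \<cdot>\<^sub>m A) = (1/c) \<cdot>\<^sub>m minv A"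
proof (rule minv_unique[of _ n])
  note IA = minv_inverse[OF A dA]
  show "c \<cdot>\<^sub>m A \<in> carrier_mat n n" "(1/c) \<cdot>\<^sub>m minv A \<in> carrier_mat n n" using A IA by auto
  have "c \<cdot>\<^sub>m A * ((1/c) \<cdot>\<^sub>m minv A) = (1/c) \<cdot>\<^sub>m (c \<cdot>\<^sub>m (A * minv A))"
    using A IA by (simp add: mult_smult_distrib' mult_smult_assoc_mat')
  also have "\<dots> = 1\<^sub>m n" using c IA by (intro eq_matI) auto
  finally show "c \<cdot>\<^sub>m A * ((1/c) \<cdot>\<^sub>m minv A) = 1\<^sub>m n" .
qed

lemma mult_nonsingular_eq_zero:
  fixes X G :: "real mat"
  assumes X: "X \<in> carrier_mat p q" and G: "G \<in> carrier_mat q q" and d: "det G \<noteq> 0"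
    and e: "X * G = 0\<^sub>m p q"
  shows "X = 0\<^sub>m p q"
proof -
  note I = minv_inverse[OF G d]
  have "X = X * (G * minv G)" using I X by (simp add: right_mult_one_mat')
  also have "\<dots> = (X * G) * minv G" using X G I by (simp add: assoc_mult_mat')
  also have "\<dots> = 0\<^sub>m p q" unfolding e using I by simp
  finally show ?thesis .
qed

lemma det_nonzero_if_gram: assumes G: "G \<in> carrier_mat q q" and d: "det (G\<^sup>T * G) \<noteq> 0"
  shows "det (G::real mat) \<noteq> 0"
  using d det_mult[of "G\<^sup>T" q G] det_transpose[OF G] G by auto

section \<open>Quadratic forms\<close>

text \<open>Vectors are \<open>p \<times> 1\<close> matrices, so that the whole argument stays in the matrix ring.\<close>

definition quad_form :: "real mat \<Rightarrow> real mat \<Rightarrow> real" where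
  "quad_form M X = (X\<^sup>T * M * X) $$ (0,0)"

definition bilin_form :: "real mat \<Rightarrow> real mat \<Rightarrow> real mat \<Rightarrow> real" where
  "bilin_form M X Y = (X\<^sup>T * M * Y) $$ (0,0)"

definition sq_norm :: "real mat \<Rightarrow> real" where
  "sq_norm X = (X\<^sup>T * X) $$ (0,0)"

lemma quad_form_bilin: "quad_form M X = bilin_form M X X" unfolding quad_form_def bilin_form_def ..

lemma quad_form_sum: assumes X: "X \<in> carrier_mat p 1" and M: "M \<in> carrier_mat p p"
  shows "quad_form M X = (\<Sum>i<p. \<Sum>j<p. X $$ (i,0) * M $$ (i,j) * X $$ (j,0))"
proof -
  have "quad_form M X = (\<Sum>i<p. X $$ (i,0) * (\<Sum>j<p. M $$ (i,j) * X $$ (j,0)))"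
    unfolding quad_form_def using X M
    by (simp add: scalar_prod_def row_def col_def atLeast0LessThan)
  also have "\<dots> = (\<Sum>i<p. \<Sum>j<p. X $$ (i,0) * M $$ (i,j) * X $$ (j,0))"
    by (simp add: sum_distrib_left mult.assoc)
  finally show ?thesis .
qed

lemma sq_norm_sum: assumes X: "X \<in> carrier_mat p 1"
  shows "sq_norm X = (\<Sum>i<p. (X $$ (i,0))\<^sup>2)"
  unfolding sq_norm_def using X
  by (simp add: scalar_prod_def row_def col_def atLeast0LessThan power2_eq_square)

lemma sq_norm_nonneg: assumes X: "X \<in> carrier_mat p 1" shows "sq_norm X \<ge> 0"
  unfolding sq_norm_sum[OF X] by (intro sum_nonneg) auto

lemma sq_norm_pos: assumes X: "X \<in> carrier_mat p 1" and nz: "X \<noteq> 0\<^sub>m p 1" shows "sq_norm X > 0"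
proof -
  obtain i where i: "i < p" "X $$ (i,0) \<noteq> 0"
  proof -
    have "\<exists>i<p. X $$ (i,0) \<noteq> 0"
    proof (rule ccontr)
      assume "\<not> ?thesis"
      hence "X = 0\<^sub>m p 1" using X by (intro eq_matI) auto
      thus False using nz by simp
    qed
    thus ?thesis using that by blast
  qed
  have "(X $$ (i,0))\<^sup>2 \<le> (\<Sum>i<p. (X $$ (i,0))\<^sup>2)"
    by (rule member_le_sum) (use i in auto)
  moreover have "(X $$ (i,0))\<^sup>2 > 0" using i by simp
  ultimately show ?thesis unfolding sq_norm_sum[OF X] by linarith
qed

lemma entry_sq_le_sq_norm: assumes X: "X \<in> carrier_mat p 1" and i: "i < p"
  shows "(X $$ (i,0))\<^sup>2 \<le> sq_norm X"
  unfolding sq_norm_sum[OF X] by (rule member_le_sum) (use i in auto)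

lemma abs_quad_form_le: assumes X: "X \<in> carrier_mat p 1" and M: "M \<in> carrier_mat p p"
  shows "\<bar>quad_form M X\<bar> \<le> (\<Sum>i<p. \<Sum>j<p. \<bar>M $$ (i,j)\<bar>) * sq_norm X"
proof -
  have "\<bar>quad_form M X\<bar> \<le> (\<Sum>i<p. \<Sum>j<p. \<bar>X $$ (i,0) * M $$ (i,j) * X $$ (j,0)\<bar>)"
    unfolding quad_form_sum[OF X M]
    by (rule order_trans[OF sum_abs], rule sum_mono, rule sum_abs)
  also have "\<dots> \<le> (\<Sum>i<p. \<Sum>j<p. \<bar>M $$ (i,j)\<bar> * sq_norm X)"
  proof (intro sum_mono)
    fix i j assume i: "i \<in> {..<p}" and j: "j \<in> {..<p}"
    have a: "(X $$ (i,0))\<^sup>2 \<le> sq_norm X" "(X $$ (j,0))\<^sup>2 \<le> sq_norm X"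
      using entry_sq_le_sq_norm[OF X] i j by auto
    have "\<bar>X $$ (i,0)\<bar> * \<bar>X $$ (j,0)\<bar> \<le> ((X $$ (i,0))\<^sup>2 + (X $$ (j,0))\<^sup>2) / 2"
    proof -
      have "0 \<le> (\<bar>X $$ (i,0)\<bar> - \<bar>X $$ (j,0)\<bar>)\<^sup>2" by simp
      thus ?thesis by (simp add: power2_eq_square algebra_simps)
    qed
    also have "\<dots> \<le> sq_norm X" using a by simp
    finally have b: "\<bar>X $$ (i,0)\<bar> * \<bar>X $$ (j,0)\<bar> \<le> sq_norm X" .
    have "\<bar>X $$ (i,0) * M $$ (i,j) * X $$ (j,0)\<bar> = \<bar>M $$ (i,j)\<bar> * (\<bar>X $$ (i,0)\<bar> * \<bar>X $$ (j,0)\<bar>)"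
      by (simp add: abs_mult)
    also have "\<dots> \<le> \<bar>M $$ (i,j)\<bar> * sq_norm X" by (rule mult_left_mono[OF b]) simp
    finally show "\<bar>X $$ (i,0) * M $$ (i,j) * X $$ (j,0)\<bar> \<le> \<bar>M $$ (i,j)\<bar> * sq_norm X" .
  qed
  also have "\<dots> = (\<Sum>i<p. \<Sum>j<p. \<bar>M $$ (i,j)\<bar>) * sq_norm X"
    by (simp add: sum_distrib_right)
  finally show ?thesis .
qed

lemma quad_form_zero: "M \<in> carrier_mat p p \<Longrightarrow> quad_form M (0\<^sub>m p 1) = 0"
  by (subst quad_form_sum[of _ p]) auto

lemma sq_norm_zero: "sq_norm (0\<^sub>m p 1) = 0" unfolding sq_norm_def by simp

lemma bilin_form_sum: assumes X: "X \<in> carrier_mat p 1" and Y: "Y \<in> carrier_mat p 1"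
  and M: "M \<in> carrier_mat p p"
  shows "bilin_form M X Y = (\<Sum>i<p. \<Sum>j<p. X $$ (i,0) * M $$ (i,j) * Y $$ (j,0))"
proof -
  have "bilin_form M X Y = (\<Sum>i<p. X $$ (i,0) * (\<Sum>j<p. M $$ (i,j) * Y $$ (j,0)))"
    unfolding bilin_form_def using X Y M
    by (simp add: scalar_prod_def row_def col_def atLeast0LessThan)
  also have "\<dots> = (\<Sum>i<p. \<Sum>j<p. X $$ (i,0) * M $$ (i,j) * Y $$ (j,0))"
    by (simp add: sum_distrib_left mult.assoc)
  finally show ?thesis .
qed

lemma bilin_form_sym: assumes X: "X \<in> carrier_mat p 1" and Y: "Y \<in> carrier_mat p 1"
  and M: "M \<in> carrier_mat p p"
  and s: "M\<^sup>T = M"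
  shows "bilin_form M X Y = bilin_form M Y X"
proof -
  have "bilin_form M X Y = (\<Sum>i<p. \<Sum>j<p. X $$ (i,0) * M $$ (i,j) * Y $$ (j,0))"
    by (rule bilin_form_sum[OF X Y M])
  also have "\<dots> = (\<Sum>j<p. \<Sum>i<p. X $$ (i,0) * M $$ (i,j) * Y $$ (j,0))" by (rule sum.swap)
  also have "\<dots> = (\<Sum>j<p. \<Sum>i<p. Y $$ (j,0) * M $$ (j,i) * X $$ (i,0))"
  proof (intro sum.cong refl)
    fix i j assume "i \<in> {..<p}" "j \<in> {..<p}"
    hence "M $$ (i,j) = M $$ (j,i)" using arg_cong[OF s, of "\<lambda>N. N $$ (j,i)"] M by auto
    thus "X $$ (i,0) * M $$ (i,j) * Y $$ (j,0) = Y $$ (j,0) * M $$ (j,i) * X $$ (i,0)" by simp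
  qed
  also have "\<dots> = bilin_form M Y X" by (rule bilin_form_sum[OF Y X M, symmetric])
  finally show ?thesis .
qed

lemma bilin_form_linear:
  assumes X: "X \<in> carrier_mat p 1" and Y: "Y \<in> carrier_mat p 1" and Z: "Z \<in> carrier_mat p 1"
    and M: "M \<in> carrier_mat p p"
  shows "bilin_form M (X + Y) Z = bilin_form M X Z + bilin_form M Y Z"
    "bilin_form M Z (X + Y) = bilin_form M Z X + bilin_form M Z Y"
    "bilin_form M (X - Y) Z = bilin_form M X Z - bilin_form M Y Z"
    "bilin_form M Z (X - Y) = bilin_form M Z X - bilin_form M Z Y"
    "bilin_form M (c \<cdot>\<^sub>m X) Z = c * bilin_form M X Z"
    "bilin_form M Z (c \<cdot>\<^sub>m X) = c * bilin_form M Z X"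
proof -
  have c: "X + Y \<in> carrier_mat p 1" "X - Y \<in> carrier_mat p 1" "c \<cdot>\<^sub>m X \<in> carrier_mat p 1"
    using X Y by auto
  show "bilin_form M (X + Y) Z = bilin_form M X Z + bilin_form M Y Z"
    "bilin_form M Z (X + Y) = bilin_form M Z X + bilin_form M Z Y"
    "bilin_form M (X - Y) Z = bilin_form M X Z - bilin_form M Y Z"
    "bilin_form M Z (X - Y) = bilin_form M Z X - bilin_form M Z Y"
    "bilin_form M (c \<cdot>\<^sub>m X) Z = c * bilin_form M X Z"
    "bilin_form M Z (c \<cdot>\<^sub>m X) = c * bilin_form M Z X"
    using X Y Z M c
    by (simp_all only: bilin_form_sum[of _ p], auto simp: algebra_simps sum.distrib sum_subtractf
      sum_distrib_left)
qed

lemma bilin_form_matrix_linear: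
  assumes X: "X \<in> carrier_mat p 1" and Y: "Y \<in> carrier_mat p 1"
    and M: "M \<in> carrier_mat p p" and N: "N \<in> carrier_mat p p"
  shows "bilin_form (M + N) X Y = bilin_form M X Y + bilin_form N X Y"
    "bilin_form (M - N) X Y = bilin_form M X Y - bilin_form N X Y"
    "bilin_form (c \<cdot>\<^sub>m M) X Y = c * bilin_form M X Y"
proof -
  have c: "M + N \<in> carrier_mat p p" "M - N \<in> carrier_mat p p" "c \<cdot>\<^sub>m M \<in> carrier_mat p p"
    using M N by auto
  show "bilin_form (M + N) X Y = bilin_form M X Y + bilin_form N X Y"
    "bilin_form (M - N) X Y = bilin_form M X Y - bilin_form N X Y"
    "bilin_form (c \<cdot>\<^sub>m M) X Y = c * bilin_form M X Y"
    using X Y M N c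
    by (simp_all only: bilin_form_sum[of _ p], auto simp: algebra_simps sum.distrib sum_subtractf
      sum_distrib_left)
qed

lemma bilin_form_one: assumes X: "X \<in> carrier_mat p 1" and Y: "Y \<in> carrier_mat p 1"
  shows "bilin_form (1\<^sub>m p) X Y = (X\<^sup>T * Y) $$ (0,0)"
  unfolding bilin_form_def using X Y by (simp add: left_mult_one_mat')

lemma sq_norm_bilin: "X \<in> carrier_mat p 1 \<Longrightarrow> sq_norm X = bilin_form (1\<^sub>m p) X X"
  by (simp add: bilin_form_one sq_norm_def)

lemma bilin_form_mult:
  assumes U: "U \<in> carrier_mat p q" and U': "U' \<in> carrier_mat p q'"
    and X: "X \<in> carrier_mat q 1" and Y: "Y \<in> carrier_mat q' 1" and M: "M \<in> carrier_mat p p"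
  shows "bilin_form M (U * X) (U' * Y) = bilin_form (U\<^sup>T * M * U') X Y"
  unfolding bilin_form_def using U U' X Y M by (simp add: transpose_mult' assoc_mult_mat')

lemma quad_form_mult: "U \<in> carrier_mat p q \<Longrightarrow> Y \<in> carrier_mat q 1 \<Longrightarrow> M \<in> carrier_mat p p \<Longrightarrow>
  quad_form M (U * Y) = quad_form (U\<^sup>T * M * U) Y"
  unfolding quad_form_bilin by (rule bilin_form_mult)

lemma quad_form_minv_mult:
  assumes H: "H \<in> carrier_mat p p" and d: "det H \<noteq> 0" and sym: "H\<^sup>T = H" and b: "b \<in> carrier_mat p 1"
  shows "quad_form H (minv H * b) = quad_form (minv H) b"
  unfolding quad_form_def
    using minv_carrier[OF H] minv_cancel(1)[OF H d, of b] minv_symmetric[OF H d sym] H b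
  by (simp add: transpose_mult' assoc_mult_mat')

lemma quad_form_smult_one: "Y \<in> carrier_mat p 1 \<Longrightarrow> quad_form (c \<cdot>\<^sub>m 1\<^sub>m p) Y = c * sq_norm Y"
  unfolding quad_form_bilin sq_norm_bilin
    by (simp add: bilin_form_matrix_linear(3)[of Y p Y "1\<^sub>m p" "1\<^sub>m p"])

lemma quad_form_minus: "M \<in> carrier_mat p p \<Longrightarrow> N \<in> carrier_mat p p \<Longrightarrow> Y \<in> carrier_mat p 1 \<Longrightarrow>
  quad_form (M - N) Y = quad_form M Y - quad_form N Y"
  unfolding quad_form_bilin by (simp add: bilin_form_matrix_linear(2)[of Y p Y M N])

lemma quad_form_add: "M \<in> carrier_mat p p \<Longrightarrow> N \<in> carrier_mat p p \<Longrightarrow> Y \<in> carrier_mat p 1 \<Longrightarrow>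
  quad_form (M + N) Y = quad_form M Y + quad_form N Y"
  unfolding quad_form_bilin by (simp add: bilin_form_matrix_linear(1)[of Y p Y M N])

lemma quad_form_diff_expand: assumes M: "M \<in> carrier_mat p p" and s: "M\<^sup>T = M"
  and X: "X \<in> carrier_mat p 1" and Y: "Y \<in> carrier_mat p 1"
  shows "quad_form M (X - Y) = quad_form M X - 2 * bilin_form M X Y + quad_form M Y"
proof -
  have XY: "X - Y \<in> carrier_mat p 1" using X Y by simp
  show ?thesis unfolding quad_form_bilin bilin_form_linear(3)[OF X Y XY M]
    bilin_form_linear(4)[OF X Y X M] bilin_form_linear(4)[OF X Y Y M]
    using bilin_form_sym[OF X Y M s] by simp
qed

lemma mult_left_invertible_nonzero: fixes U Y W :: "real mat" assumes U: "U \<in> carrier_mat p q"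
  and Y: "Y \<in> carrier_mat q 1" and W: "W \<in> carrier_mat q p"
  and WU: "W * U = 1\<^sub>m q" and nz: "Y \<noteq> 0\<^sub>m q 1" shows "U * Y \<noteq> 0\<^sub>m p 1"
proof
  assume "U * Y = 0\<^sub>m p 1"
  hence "W * (U * Y) = 0\<^sub>m q 1" using W by simp
  moreover have "W * (U * Y) = Y"
    using assoc_mult_mat_subst[OF _ _ WU, of Y] U W Y left_mult_one_mat[OF Y] by simp
  ultimately show False using nz by simp
qed

lemma nonneg_quadratic_discriminant:
  fixes a b c :: real
  assumes h: "\<And>t. 0 \<le> a + 2 * b * t + c * t\<^sup>2" and c: "c \<ge> 0"
  shows "b\<^sup>2 \<le> a * c"
proof (cases "c = 0")
  case True
  have "b = 0"
  proof (rule ccontr)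
    assume b: "b \<noteq> 0"
    have "0 \<le> a + 2 * b * (- (\<bar>a\<bar> + 1) / (2 * b))" using h[of "- (\<bar>a\<bar> + 1) / (2 * b)"] True by simp
    also have "\<dots> = a - (\<bar>a\<bar> + 1)" using b by (simp add: field_simps)
    finally show False by linarith
  qed
  thus ?thesis using True by simp
next
  case False
  hence cp: "c > 0" using c by simp
  have "0 \<le> a + 2 * b * (- b / c) + c * (- b / c)\<^sup>2" by (rule h)
  also have "\<dots> = a - b\<^sup>2 / c" using cp by (simp add: field_simps power2_eq_square)
  finally have "b\<^sup>2 / c \<le> a" by simp
  thus ?thesis using cp by (simp add: field_simps mult.commute)
qed

lemma psd_cauchy_schwarz:
  assumes X: "X \<in> carrier_mat p 1" and Y: "Y \<in> carrier_mat p 1" and M: "M \<in> carrier_mat p p"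
    and s: "M\<^sup>T = M" and psd: "\<And>Z. Z \<in> carrier_mat p 1 \<Longrightarrow> quad_form M Z \<ge> 0"
  shows "(bilin_form M X Y)\<^sup>2 \<le> quad_form M X * quad_form M Y"
proof -
  have "0 \<le> quad_form M X + 2 * bilin_form M X Y * t + quad_form M Y * t\<^sup>2" for t
  proof -
    have "0 \<le> quad_form M (X + t \<cdot>\<^sub>m Y)" using psd X Y by simp
    also have "\<dots> = quad_form M X + 2 * bilin_form M X Y * t + quad_form M Y * t\<^sup>2"
      unfolding quad_form_bilin using X Y M bilin_form_sym[OF X Y M s]
      by (simp add: bilin_form_linear[of _ p] power2_eq_square algebra_simps)
    finally show ?thesis .
  qed
  from nonneg_quadratic_discriminant[OF this] psd[OF Y] show ?thesis by simp
qed

definition mat_of_col :: "real vec \<Rightarrow> real mat" where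
  "mat_of_col x = mat (dim_vec x) 1 (\<lambda>(i,j). x $ i)"

lemma mat_of_col_carrier[simp]: "x \<in> carrier_vec p \<Longrightarrow> mat_of_col x \<in> carrier_mat p 1"
  unfolding mat_of_col_def by auto

lemma col_mat_of_col: "col (mat_of_col v) 0 = v"
  unfolding mat_of_col_def by (intro eq_vecI) auto

lemma mult_mat_of_col: "dim_col M = dim_vec v \<Longrightarrow> M * mat_of_col v = mat_of_col (M *\<^sub>v v)"
proof (intro eq_matI)
  fix i j assume "dim_col M = dim_vec v" "i < dim_row (mat_of_col (M *\<^sub>v v))"
    "j < dim_col (mat_of_col (M *\<^sub>v v))"
  thus "(M * mat_of_col v) $$ (i, j) = mat_of_col (M *\<^sub>v v) $$ (i, j)"
    using col_mat_of_col[of v] unfolding mat_of_col_def by auto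
qed (auto simp: mat_of_col_def)

lemma mat_of_col_inj: "mat_of_col v = mat_of_col w \<Longrightarrow> v = w"
proof -
  assume h: "mat_of_col v = mat_of_col w"
  hence d: "dim_vec v = dim_vec w" unfolding mat_of_col_def by (metis dim_row_mat(1))
  show "v = w"
  proof (rule eq_vecI)
    fix i assume "i < dim_vec w"
    hence "mat_of_col v $$ (i,0) = v $ i" "mat_of_col w $$ (i,0) = w $ i" using d
      unfolding mat_of_col_def by auto
    thus "v $ i = w $ i" using h by simp
  qed (use d in auto)
qed

lemma quad_form_mat_of_col: assumes x: "x \<in> carrier_vec p" and M: "M \<in> carrier_mat p p"
  shows "quad_form M (mat_of_col x) = x \<bullet> (M *\<^sub>v x)"
proof -
  have "quad_form M (mat_of_col x) = (\<Sum>i<p. (\<Sum>k<p. x $ k * M $$ (k,i)) * x $ i)"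
    unfolding quad_form_def mat_of_col_def using x M
    by (simp add: scalar_prod_def row_def col_def atLeast0LessThan)
  also have "\<dots> = (\<Sum>i<p. \<Sum>k<p. x $ k * M $$ (k,i) * x $ i)"
    by (simp add: sum_distrib_right)
  also have "\<dots> = (\<Sum>k<p. \<Sum>i<p. x $ k * M $$ (k,i) * x $ i)"
    by (rule sum.swap)
  also have "\<dots> = (\<Sum>i<p. x $ i * (\<Sum>j<p. M $$ (i,j) * x $ j))"
    by (simp add: sum_distrib_left mult.assoc)
  also have "\<dots> = x \<bullet> (M *\<^sub>v x)"
    using x M by (simp add: scalar_prod_def row_def atLeast0LessThan)
  finally show ?thesis .
qed

lemma mat_of_col_nonzero: assumes x: "x \<in> carrier_vec p" and nz: "x \<noteq> 0\<^sub>v p"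
  shows "mat_of_col x \<noteq> 0\<^sub>m p 1"
proof
  assume "mat_of_col x = 0\<^sub>m p 1"
  hence "\<forall>i<p. x $ i = 0"
  proof (intro allI impI)
    fix i assume e: "mat_of_col x = 0\<^sub>m p 1" and i: "i < p"
    have "mat_of_col x $$ (i,0) = x $ i" using x i unfolding mat_of_col_def by auto
    thus "x $ i = 0" using e i by simp
  qed
  hence "x = 0\<^sub>v p" using x by (intro eq_vecI) auto
  thus False using nz by simp
qed

definition col_of_mat :: "real mat \<Rightarrow> real vec" where "col_of_mat X = col X 0"

lemma mat_of_col_col_of_mat: "X \<in> carrier_mat p 1 \<Longrightarrow> mat_of_col (col_of_mat X) = X"
  unfolding mat_of_col_def col_of_mat_def by (intro eq_matI) auto

lemma col_of_mat_carrier: "X \<in> carrier_mat p 1 \<Longrightarrow> col_of_mat X \<in> carrier_vec p"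
  unfolding col_of_mat_def by auto

lemma col_of_mat_nonzero: "X \<in> carrier_mat p 1 \<Longrightarrow> X \<noteq> 0\<^sub>m p 1 \<Longrightarrow> col_of_mat X \<noteq> 0\<^sub>v p"
proof
  assume X: "X \<in> carrier_mat p 1" and nz: "X \<noteq> 0\<^sub>m p 1" and v: "col_of_mat X = 0\<^sub>v p"
  have "X = 0\<^sub>m p 1"
  proof (rule eq_matI)
    fix i j assume "i < dim_row (0\<^sub>m p 1)" "j < dim_col (0\<^sub>m p 1)"
    hence ij: "i < p" "j = 0" by auto
    have "col_of_mat X $ i = 0" using v ij by simp
    thus "X $$ (i,j) = 0\<^sub>m p 1 $$ (i,j)" using X ij unfolding col_of_mat_def by auto
  qed (use X in auto)
  thus False using nz by simp
qed

lemma full_col_rank_det_gram: assumes R: "R \<in> carrier_mat p q" and f: "full_col_rank R"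
  shows "det (R\<^sup>T * R) \<noteq> 0"
proof
  assume d: "det (R\<^sup>T * R) = 0"
  have c: "R\<^sup>T * R \<in> carrier_mat q q" using R by simp
  obtain v where v: "v \<in> carrier_vec q" "v \<noteq> 0\<^sub>v q" "(R\<^sup>T * R) *\<^sub>v v = 0\<^sub>v q"
    using d det_0_iff_vec_prod_zero[OF c] by auto
  define X where "X = mat_of_col v"
  have X: "X \<in> carrier_mat q 1" unfolding X_def by (rule mat_of_col_carrier[OF v(1)])
  have "sq_norm (R * X) = quad_form (R\<^sup>T * R) X" unfolding sq_norm_def quad_form_def using R X
    by (simp add: transpose_mult' assoc_mult_mat')
  also have "\<dots> = 0"
  proof -
    have "(R\<^sup>T * R) * X = mat_of_col ((R\<^sup>T * R) *\<^sub>v v)" unfolding X_def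
      by (rule mult_mat_of_col) (use v R in simp)
    also have "\<dots> = 0\<^sub>m q 1" unfolding v(3) by (intro eq_matI) (auto simp: mat_of_col_def)
    finally have e: "(R\<^sup>T * R) * X = 0\<^sub>m q 1" .
    have "quad_form (R\<^sup>T * R) X = (X\<^sup>T * ((R\<^sup>T * R) * X)) $$ (0,0)" unfolding quad_form_def
      using R X by (simp add: assoc_mult_mat')
    also have "\<dots> = 0" unfolding e using X by simp
    finally show ?thesis .
  qed
  finally have n0: "sq_norm (R * X) = 0" .
  have RX: "R * X = 0\<^sub>m p 1"
  proof (rule ccontr)
    assume "R * X \<noteq> 0\<^sub>m p 1"
    hence "sq_norm (R * X) > 0" using R X by (intro sq_norm_pos) auto
    thus False using n0 by simp
  qed
  have e1: "mat_of_col (R *\<^sub>v v) = 0\<^sub>m p 1" using RX mult_mat_of_col[of R v] R v unfolding X_def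
    by simp
  have e2: "mat_of_col (0\<^sub>v p) = 0\<^sub>m p 1" by (intro eq_matI) (auto simp: mat_of_col_def)
  have "mat_of_col (R *\<^sub>v v) = mat_of_col (0\<^sub>v p)" unfolding e1 e2 ..
  hence "R *\<^sub>v v = 0\<^sub>v p" by (rule mat_of_col_inj)
  hence "v = 0\<^sub>v q" using f v R unfolding full_col_rank_def by auto
  thus False using v by simp
qed

section \<open>Positive definite matrices\<close>

definition pos_def :: "nat \<Rightarrow> real mat \<Rightarrow> bool" where
  "pos_def p M \<longleftrightarrow> M \<in> carrier_mat p p \<and> M\<^sup>T = M \<and>
     (\<forall>X \<in> carrier_mat p 1. X \<noteq> 0\<^sub>m p 1 \<longrightarrow> quad_form M X > 0)"

lemma spd_iff_pos_def: "spd p M \<longleftrightarrow> pos_def p M"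
proof
  assume s: "spd p M"
  hence M: "M \<in> carrier_mat p p" unfolding spd_def by auto
  show "pos_def p M" unfolding pos_def_def
  proof (intro conjI ballI impI)
    fix X :: "real mat" assume X: "X \<in> carrier_mat p 1" and nz: "X \<noteq> 0\<^sub>m p 1"
    have "quad_form M X = quad_form M (mat_of_col (col_of_mat X))" using mat_of_col_col_of_mat[OF X]
      by simp
    also have "\<dots> = col_of_mat X \<bullet> (M *\<^sub>v col_of_mat X)"
      by (rule quad_form_mat_of_col[OF col_of_mat_carrier[OF X] M])
    finally show "quad_form M X > 0" using s col_of_mat_carrier[OF X] col_of_mat_nonzero[OF X nz]
      unfolding spd_def by auto
  qed (use s in \<open>auto simp: spd_def\<close>)
next
  assume s: "pos_def p M"
  hence M: "M \<in> carrier_mat p p" unfolding pos_def_def by auto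
  show "spd p M" unfolding spd_def
  proof (intro conjI ballI impI)
    fix x :: "real vec" assume x: "x \<in> carrier_vec p" and nz: "x \<noteq> 0\<^sub>v p"
    show "x \<bullet> (M *\<^sub>v x) > 0"
      using s mat_of_col_nonzero[OF x nz] quad_form_mat_of_col[OF x M] mat_of_col_carrier[OF x]
      unfolding pos_def_def by auto
  qed (use s in \<open>auto simp: pos_def_def\<close>)
qed

lemma pos_def_carrier: "pos_def p M \<Longrightarrow> M \<in> carrier_mat p p" unfolding pos_def_def by auto

lemma pos_def_symmetric: "pos_def p M \<Longrightarrow> M\<^sup>T = M" unfolding pos_def_def by auto

lemma pos_def_det: assumes "pos_def p M" shows "det M \<noteq> 0"
proof
  assume d: "det M = 0"
  have M: "M \<in> carrier_mat p p" using assms unfolding pos_def_def by auto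
  obtain v where v: "v \<in> carrier_vec p" "v \<noteq> 0\<^sub>v p" "M *\<^sub>v v = 0\<^sub>v p"
    using d det_0_iff_vec_prod_zero[OF M] by auto
  have "v \<bullet> (M *\<^sub>v v) > 0" using assms v unfolding spd_iff_pos_def[symmetric] spd_def by auto
  thus False using v by simp
qed

lemma pos_def_minv: assumes H: "pos_def p H"
  shows "minv H \<in> carrier_mat p p" "(minv H)\<^sup>T = minv H" "H * minv H = 1\<^sub>m p" "minv H * H = 1\<^sub>m p"
  using minv_inverse[OF pos_def_carrier[OF H] pos_def_det[OF H]]
    minv_symmetric[OF pos_def_carrier[OF H] pos_def_det[OF H] pos_def_symmetric[OF H]]
  by auto

lemma pos_def_quad_form_nonneg: "pos_def p H \<Longrightarrow> X \<in> carrier_mat p 1 \<Longrightarrow> quad_form H X \<ge> 0"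
  using quad_form_zero[of H p] unfolding pos_def_def
    by (cases "X = 0\<^sub>m p 1") (auto intro: less_imp_le)

lemma pos_def_add: "pos_def p X \<Longrightarrow> pos_def p S \<Longrightarrow> pos_def p (X + S)"
proof -
  assume X: "pos_def p X" and S: "pos_def p S"
  have c: "X \<in> carrier_mat p p" "S \<in> carrier_mat p p" using X S unfolding pos_def_def by auto
  show "pos_def p (X + S)" unfolding pos_def_def
  proof (intro conjI ballI impI)
    show "X + S \<in> carrier_mat p p" using c by simp
    show "(X + S)\<^sup>T = X + S" using c pos_def_symmetric[OF X] pos_def_symmetric[OF S]
      by (simp add: transpose_add')
    fix Y :: "real mat" assume Y: "Y \<in> carrier_mat p 1" "Y \<noteq> 0\<^sub>m p 1"
    have "quad_form (X + S) Y = quad_form X Y + quad_form S Y" unfolding quad_form_bilin using c Y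
      by (simp add: bilin_form_matrix_linear[of _ p])
    thus "quad_form (X + S) Y > 0" using X S Y unfolding pos_def_def by (smt (verit))
  qed
qed

lemma pos_def_congruence:
  assumes M: "pos_def p M" and U: "U \<in> carrier_mat p q"
    and W: "W \<in> carrier_mat q p" and WU: "W * U = 1\<^sub>m q"
  shows "pos_def q (U\<^sup>T * M * U)"
  unfolding pos_def_def
proof (intro conjI ballI impI)
  have c: "M \<in> carrier_mat p p" and s: "M\<^sup>T = M" using M unfolding pos_def_def by auto
  show "U\<^sup>T * M * U \<in> carrier_mat q q" using c U by simp
  show "(U\<^sup>T * M * U)\<^sup>T = U\<^sup>T * M * U" using c U s by (simp add: transpose_mult' assoc_mult_mat')
  fix X :: "real mat" assume X: "X \<in> carrier_mat q 1" "X \<noteq> 0\<^sub>m q 1"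
  have "U * X \<noteq> 0\<^sub>m p 1" by (rule mult_left_invertible_nonzero[OF U X(1) W WU X(2)])
  hence "quad_form M (U * X) > 0" using M U X unfolding pos_def_def by auto
  thus "quad_form (U\<^sup>T * M * U) X > 0" using quad_form_mult[OF U X(1) c] by simp
qed

lemma pos_def_minv_variational:
  assumes H: "pos_def p H" and b: "b \<in> carrier_mat p 1" and c: "c \<in> carrier_mat p 1"
  shows "quad_form (minv H) b \<ge> 2 * (c\<^sup>T * b) $$ (0,0) - quad_form H c"
proof -
  note HI = pos_def_minv[OF H]
  have Hc: "H \<in> carrier_mat p p" and Hs: "H\<^sup>T = H" using H unfolding pos_def_def by auto
  define y where "y = minv H * b"
  have y: "y \<in> carrier_mat p 1" unfolding y_def using HI b by simp
  have Hy: "H * y = b" unfolding y_def using minv_cancel(1)[OF Hc pos_def_det[OF H]] b by simp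
  have "0 \<le> quad_form H (c - y)"
    by (rule pos_def_quad_form_nonneg[OF H], intro carrier_matI) (use c y in auto)
  also have "\<dots> = quad_form H c - 2 * bilin_form H c y + quad_form H y"
  proof -
    have cy: "c - y \<in> carrier_mat p 1" using c y by (intro carrier_matI) auto
    show ?thesis unfolding quad_form_bilin bilin_form_linear(3)[OF c y cy Hc]
      bilin_form_linear(4)[OF c y c Hc] bilin_form_linear(4)[OF c y y Hc]
      using bilin_form_sym[OF c y Hc Hs] by simp
  qed
  also have "bilin_form H c y = (c\<^sup>T * b) $$ (0,0)" unfolding bilin_form_def using Hy c y Hc
    by (simp add: assoc_mult_mat')
  also have "quad_form H y = quad_form (minv H) b"
  proof -
    have "quad_form H y = (y\<^sup>T * (H * y)) $$ (0,0)" unfolding quad_form_def using y Hc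
      by (simp add: assoc_mult_mat')
    also have "\<dots> = (b\<^sup>T * (minv H * b)) $$ (0,0)" unfolding Hy unfolding y_def using HI b
      by (simp add: transpose_mult')
    finally show ?thesis unfolding quad_form_def using HI b by (simp add: assoc_mult_mat')
  qed
  finally show ?thesis by simp
qed

lemma pos_def_minv_diff: assumes X: "pos_def p X" and S: "pos_def p S"
  shows "pos_def p (minv X - minv (X + S))"
proof -
  have Y: "pos_def p (X + S)" by (rule pos_def_add[OF X S])
  note XI = pos_def_minv[OF X] and YI = pos_def_minv[OF Y]
  have c: "X \<in> carrier_mat p p" "S \<in> carrier_mat p p" using X S unfolding pos_def_def by auto
  show ?thesis unfolding pos_def_def
  proof (intro conjI ballI impI)
    show "minv X - minv (X + S) \<in> carrier_mat p p" using XI YI by simp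
    show "(minv X - minv (X + S))\<^sup>T = minv X - minv (X + S)" using XI YI
      by (simp add: transpose_minus')
    fix w :: "real mat" assume w: "w \<in> carrier_mat p 1" "w \<noteq> 0\<^sub>m p 1"
    define c where "c = minv (X + S) * w"
    have cc: "c \<in> carrier_mat p 1" unfolding c_def using YI w by simp
    have XSc: "X + S \<in> carrier_mat p p" using c by simp
    have Yc: "(X + S) * c = w" unfolding c_def using minv_cancel(1)[OF XSc pos_def_det[OF Y]] w
      by simp
    have cnz: "c \<noteq> 0\<^sub>m p 1"
    proof
      assume "c = 0\<^sub>m p 1"
      hence "(X + S) * c = 0\<^sub>m p 1" using c by simp
      thus False using Yc w by simp
    qed
    have qS: "quad_form S c > 0" using S cc cnz unfolding pos_def_def by auto
    have v: "quad_form (minv X) w \<ge> 2 * (c\<^sup>T * w) $$ (0,0) - quad_form X c"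
      by (rule pos_def_minv_variational[OF X w(1) cc])
    have cw: "(c\<^sup>T * w) $$ (0,0) = quad_form (minv (X + S)) w"
      unfolding quad_form_def c_def using YI w by (simp add: transpose_mult' assoc_mult_mat')
    have qY: "quad_form (X + S) c = (c\<^sup>T * w) $$ (0,0)" unfolding quad_form_def using Yc cc c
      by (simp add: assoc_mult_mat')
    have qXS: "quad_form (X + S) c = quad_form X c + quad_form S c" unfolding quad_form_bilin
      using c cc by (simp add: bilin_form_matrix_linear[of _ p])
    have "quad_form (minv X - minv (X + S)) w = quad_form (minv X) w - quad_form (minv (X + S)) w"
      unfolding quad_form_bilin using XI YI w by (simp add: bilin_form_matrix_linear[of _ p])
    thus "quad_form (minv X - minv (X + S)) w > 0" using v cw qY qXS qS by linarith
  qed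
qed

section \<open>The smallest eigenvalue\<close>

lemma psd_nonsingular_coercive:
  assumes N: "N \<in> carrier_mat p p" and sym: "N\<^sup>T = N" and d: "det N \<noteq> 0"
    and psd: "\<And>Y. Y \<in> carrier_mat p 1 \<Longrightarrow> quad_form N Y \<ge> 0"
  obtains c where "c > 0" "\<And>Y. Y \<in> carrier_mat p 1 \<Longrightarrow> sq_norm Y \<le> c * quad_form N Y"
proof -
  define Ni where "Ni = minv N"
  have Ni: "Ni \<in> carrier_mat p p" "N * Ni = 1\<^sub>m p" and Ni_sym: "Ni\<^sup>T = Ni"
    using minv_inverse[OF N d] minv_symmetric[OF N d sym] unfolding Ni_def by auto
  define c where "c = (\<Sum>i<p. \<Sum>j<p. \<bar>Ni $$ (i,j)\<bar>)"
  have c: "c \<ge> 0" unfolding c_def by (intro sum_nonneg) auto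
  have "sq_norm Y \<le> (c + 1) * quad_form N Y" if Y: "Y \<in> carrier_mat p 1" for Y
  proof -
    define Z where "Z = Ni * Y"
    have Z: "Z \<in> carrier_mat p 1" unfolding Z_def using Ni Y by simp
    have NZ: "N * Z = Y" unfolding Z_def using Ni Y N by (intro right_inverse_cancel[of _ _ p]) auto
    have "bilin_form N Y Z = sq_norm Y"
      unfolding bilin_form_def sq_norm_def using NZ Y N Z by (simp add: assoc_mult_mat')
    moreover have "quad_form N Z = quad_form Ni Y"
      unfolding quad_form_def using NZ Y N Ni Ni_sym unfolding Z_def
      by (simp add: assoc_mult_mat' transpose_mult')
    ultimately have "(sq_norm Y)\<^sup>2 \<le> quad_form N Y * quad_form Ni Y"
      using psd_cauchy_schwarz[OF Y Z N sym psd] by simp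
    also have "\<dots> \<le> quad_form N Y * (c * sq_norm Y)"
      using abs_quad_form_le[OF Y Ni(1)] psd[OF Y] unfolding c_def
      by (intro mult_left_mono) auto
    finally have "sq_norm Y * sq_norm Y \<le> sq_norm Y * (c * quad_form N Y)"
      by (simp add: power2_eq_square algebra_simps)
    hence "sq_norm Y \<le> c * quad_form N Y"
      using sq_norm_nonneg[OF Y] c psd[OF Y] by (cases "sq_norm Y = 0") auto
    thus ?thesis using psd[OF Y] by (simp add: algebra_simps)
  qed
  moreover have "c + 1 > 0" using c by simp
  ultimately show ?thesis using that by blast
qed

lemma finite_eigenvalues: assumes A: "(A::real mat) \<in> carrier_mat n n"
  shows "finite {ev. eigenvalue A ev}"
proof -
  have "char_poly A \<noteq> 0" using degree_monic_char_poly[OF A] by auto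
  hence "finite {x. poly (char_poly A) x = 0}" by (rule poly_roots_finite)
  moreover have "{ev. eigenvalue A ev} \<subseteq> {x. poly (char_poly A) x = 0}"
    using eigenvalue_root_char_poly[OF A] by auto
  ultimately show ?thesis by (rule finite_subset[rotated])
qed

lemma quad_form_char_matrix: assumes A: "A \<in> carrier_mat n n" and X: "X \<in> carrier_mat n 1"
  shows "quad_form (char_matrix A s) X = quad_form A X - s * sq_norm X"
  unfolding char_matrix_def quad_form_bilin sq_norm_bilin[OF X] using A X
  by (simp add: bilin_form_matrix_linear[of _ n])

lemma greatest_Rayleigh_lower_bound:
  fixes A X :: "real mat"
  assumes A: "A \<in> carrier_mat n n" and X: "X \<in> carrier_mat n 1" and nz: "X \<noteq> 0\<^sub>m n 1"
  obtains s where "\<And>Y. Y \<in> carrier_mat n 1 \<Longrightarrow> s * sq_norm Y \<le> quad_form A Y"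
    and "\<And>t. (\<And>Y. Y \<in> carrier_mat n 1 \<Longrightarrow> t * sq_norm Y \<le> quad_form A Y) \<Longrightarrow> t \<le> s"
proof -
  define T where "T = {t. \<forall>Y\<in>carrier_mat n 1. t * sq_norm Y \<le> quad_form A Y}"
  have "- (\<Sum>i<n. \<Sum>j<n. \<bar>A $$ (i,j)\<bar>) \<in> T"
    unfolding T_def
  proof (intro CollectI ballI)
    fix Y :: "real mat" assume "Y \<in> carrier_mat n 1"
    from abs_quad_form_le[OF this A]
    show "- (\<Sum>i<n. \<Sum>j<n. \<bar>A $$ (i,j)\<bar>) * sq_norm Y \<le> quad_form A Y" by linarith
  qed
  hence T_ne: "T \<noteq> {}" by blast
  have pX: "sq_norm X > 0" by (rule sq_norm_pos[OF X nz])
  have bdd: "bdd_above T"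
  proof (rule bdd_aboveI)
    fix t assume "t \<in> T"
    hence "t * sq_norm X \<le> quad_form A X" using X unfolding T_def by auto
    thus "t \<le> quad_form A X / sq_norm X" using pX by (simp add: field_simps)
  qed
  have "Sup T * sq_norm Y \<le> quad_form A Y" if Y: "Y \<in> carrier_mat n 1" for Y
  proof (cases "Y = 0\<^sub>m n 1")
    case True thus ?thesis using quad_form_zero[OF A] sq_norm_zero[of n] by simp
  next
    case False
    hence p: "sq_norm Y > 0" by (rule sq_norm_pos[OF Y])
    have "Sup T \<le> quad_form A Y / sq_norm Y"
      by (rule cSup_least[OF T_ne]) (use Y p in \<open>auto simp: T_def field_simps\<close>)
    thus ?thesis using p by (simp add: field_simps)
  qed
  moreover have "t \<le> Sup T" if "\<And>Y. Y \<in> carrier_mat n 1 \<Longrightarrow> t * sq_norm Y \<le> quad_form A Y" for t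
    by (rule cSup_upper[OF _ bdd]) (use that in \<open>simp add: T_def\<close>)
  ultimately show ?thesis using that by blast
qed

text \<open>The largest lower bound \<open>s\<close> of the Rayleigh quotient is an eigenvalue: otherwise
  \<open>A - sI\<close> would be positive semidefinite and nonsingular, hence coercive, and \<open>s\<close> could be
  increased.\<close>

lemma eigenvalue_Rayleigh_lower_bound:
  fixes A X :: "real mat"
  assumes A: "A \<in> carrier_mat n n" and sym: "A\<^sup>T = A"
    and X: "X \<in> carrier_mat n 1" and nz: "X \<noteq> 0\<^sub>m n 1"
  obtains s where "eigenvalue A s" "\<And>Y. Y \<in> carrier_mat n 1 \<Longrightarrow> s * sq_norm Y \<le> quad_form A Y"
proof -
  obtain s where s_lower: "\<And>Y. Y \<in> carrier_mat n 1 \<Longrightarrow> s * sq_norm Y \<le> quad_form A Y"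
    and s_greatest: "\<And>t. (\<And>Y. Y \<in> carrier_mat n 1 \<Longrightarrow> t * sq_norm Y \<le> quad_form A Y) \<Longrightarrow> t \<le> s"
    using greatest_Rayleigh_lower_bound[OF A X nz] by blast
  define N where "N = char_matrix A s"
  have N: "N \<in> carrier_mat n n" unfolding N_def using A by simp
  have N_sym: "N\<^sup>T = N" unfolding N_def char_matrix_def using A sym
    by (simp add: transpose_add' transpose_smult_mat)
  have qN: "quad_form N Y = quad_form A Y - s * sq_norm Y" if "Y \<in> carrier_mat n 1" for Y
    unfolding N_def by (rule quad_form_char_matrix[OF A that])
  have N_psd: "quad_form N Y \<ge> 0" if "Y \<in> carrier_mat n 1" for Y
    using qN[OF that] s_lower[OF that] by simp
  have "det N = 0"
  proof (rule ccontr)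
    assume "det N \<noteq> 0"
    then obtain c where c: "c > 0" "\<And>Y. Y \<in> carrier_mat n 1 \<Longrightarrow> sq_norm Y \<le> c * quad_form N Y"
      using psd_nonsingular_coercive[OF N N_sym _ N_psd] by blast
    have "(s + 1 / c) * sq_norm Y \<le> quad_form A Y" if Y: "Y \<in> carrier_mat n 1" for Y
    proof -
      have "sq_norm Y / c \<le> quad_form N Y" using c(2)[OF Y] c(1) by (simp add: field_simps)
      thus ?thesis using qN[OF Y] by (simp add: algebra_simps)
    qed
    hence "s + 1 / c \<le> s" by (rule s_greatest)
    thus False using c(1) by simp
  qed
  hence "eigenvalue A s" using eigenvalue_det[OF A] unfolding N_def by simp
  from that[OF this s_lower] show ?thesis .
qed

lemma quad_form_gt_below_lambda_min:
  assumes A: "A \<in> carrier_mat n n" and sym: "A\<^sup>T = A" and mu: "\<mu> < lambda_min A"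
    and X: "X \<in> carrier_mat n 1" and nz: "X \<noteq> 0\<^sub>m n 1"
  shows "quad_form A X > \<mu> * sq_norm X"
proof -
  obtain s where s: "eigenvalue A s" "\<And>Y. Y \<in> carrier_mat n 1 \<Longrightarrow> s * sq_norm Y \<le> quad_form A Y"
    using eigenvalue_Rayleigh_lower_bound[OF A sym X nz] by blast
  have "lambda_min A \<le> s" unfolding lambda_min_def
    by (intro Min_le finite_eigenvalues[OF A]) (use s in simp)
  hence "\<mu> * sq_norm X < s * sq_norm X" using mu sq_norm_pos[OF X nz] by simp
  thus ?thesis using s(2)[OF X] by linarith
qed

section \<open>Block Lanczos\<close>

locale block_lanczos =
  fixes n m l :: nat and A R0 :: "real mat" and V Gam Om :: "nat \<Rightarrow> real mat"
  assumes A: "A \<in> carrier_mat n n" and Asym: "A\<^sup>T = A"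
    and Apd: "pos_def n A"
    and lz: "lanczos n m A R0 l V Gam Om"
    and l1: "1 \<le> l"
begin

lemma V_0: "V 0 = 0\<^sub>m n m" using lz unfolding lanczos_def by auto

lemma QR_first: "is_QR n m R0 (V 1) (Gam 0)" using lz unfolding lanczos_def by auto

lemma QR_step: assumes "1 \<le> k" "k < l"
  shows "Om k = (V k)\<^sup>T * (A * V k - V (k - 1) * (Gam (k - 1))\<^sup>T)"
    "is_QR n m (A * V k - V (k - 1) * (Gam (k - 1))\<^sup>T - V k * Om k) (V (k + 1)) (Gam k)"
  using lz assms unfolding lanczos_def Let_def by auto

lemma V_carrier: "k \<le> l \<Longrightarrow> V k \<in> carrier_mat n m"
proof (induct k)
  case 0 thus ?case using V_0 by simp
next
  case (Suc k)
  show ?case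
  proof (cases k)
    case 0 thus ?thesis using QR_first unfolding is_QR_def by simp
  next
    case (Suc k') 
    hence "1 \<le> k" "k < l" using Suc.prems by auto
    from QR_step(2)[OF this] show ?thesis unfolding is_QR_def by simp
  qed
qed

lemma Gam_carrier: "k < l \<Longrightarrow> Gam k \<in> carrier_mat m m"
proof (cases k)
  case 0 thus ?thesis using QR_first unfolding is_QR_def by simp
next
  case (Suc k')
  assume "k < l"
  hence "1 \<le> k" "k < l" using Suc by auto
  from QR_step(2)[OF this] show ?thesis unfolding is_QR_def by simp
qed

lemma V_orthonormal: assumes "1 \<le> k" "k \<le> l" shows "(V k)\<^sup>T * V k = 1\<^sub>m m"
proof (cases k)
  case 0 thus ?thesis using assms by simp
next
  case (Suc k')
  show ?thesis
  proof (cases k')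
    case 0 thus ?thesis using QR_first Suc unfolding is_QR_def by simp
  next
    case (Suc k'')
    hence "1 \<le> k'" "k' < l" using assms \<open>k = Suc k'\<close> by auto
    from QR_step(2)[OF this] show ?thesis unfolding is_QR_def using \<open>k = Suc k'\<close> by simp
  qed
qed

lemma R0_eq: "R0 = V 1 * Gam 0" using QR_first unfolding is_QR_def by simp

text \<open>\<open>OmA k\<close> agrees with \<open>Om k\<close> only once the blocks are known to be orthonormal.\<close>

definition OmA where "OmA k = (V k)\<^sup>T * A * V k"

definition Res where "Res j = A * V j - V (j - 1) * (Gam (j - 1))\<^sup>T - V j * OmA j"

lemma OmA_carrier: "k \<le> l \<Longrightarrow> OmA k \<in> carrier_mat m m"
  unfolding OmA_def using V_carrier[of k] A by (intro carrier_matI) simp_all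

lemma Res_carrier: assumes "1 \<le> j" "j \<le> l" shows "Res j \<in> carrier_mat n m"
proof -
  have "V j \<in> carrier_mat n m" "V (j - 1) \<in> carrier_mat n m" "Gam (j - 1) \<in> carrier_mat m m"
    "OmA j \<in> carrier_mat m m" using assms by (auto intro!: V_carrier Gam_carrier OmA_carrier)
  thus ?thesis unfolding Res_def using A by (intro carrier_matI) simp_all
qed

lemma A_V_eq: assumes "1 \<le> j" "j \<le> l"
  shows "A * V j = V (j - 1) * (Gam (j - 1))\<^sup>T + V j * OmA j + Res j"
proof -
  have "V j \<in> carrier_mat n m" "V (j - 1) \<in> carrier_mat n m" "Gam (j - 1) \<in> carrier_mat m m"
    "OmA j \<in> carrier_mat m m" using assms by (auto intro!: V_carrier Gam_carrier OmA_carrier)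
  note c = this
  have split: "W = P + Q + (W - P - Q)"
    if "W \<in> carrier_mat n m" "P \<in> carrier_mat n m" "Q \<in> carrier_mat n m" for W P Q :: "real mat"
    using that by (intro eq_matI) auto
  show ?thesis unfolding Res_def by (rule split) (use c A in auto)
qed

lemma V_Suc_Gam_eq: assumes "1 \<le> j" "j < l"
  shows "V (j + 1) * Gam j = A * V j - V (j - 1) * (Gam (j - 1))\<^sup>T - V j * Om j"
  using QR_step(2)[OF assms] unfolding is_QR_def by simp

text \<open>The local QR steps of \<open>lanczos\<close> do not make distinct blocks orthogonal by
  themselves; this is established by induction in \<open>bcg_lanczos\<close>, using that the \<open>\<Gamma>_j\<close> are
  nonsingular.\<close>

definition orth_upto where "orth_upto j \<longleftrightarrow> (\<forall>i i'. 1 \<le> i \<longrightarrow> i \<le> j \<longrightarrow> 1 \<le> i' \<longrightarrow> i' \<le> j \<longrightarrow>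
   (V i)\<^sup>T * V i' = (if i = i' then 1\<^sub>m m else 0\<^sub>m m m))"

lemma orth_upto_mono: "orth_upto j \<Longrightarrow> j' \<le> j \<Longrightarrow> orth_upto j'" unfolding orth_upto_def by auto

lemma orth_uptoD: "orth_upto j \<Longrightarrow> 1 \<le> i \<Longrightarrow> i \<le> j \<Longrightarrow> 1 \<le> i' \<Longrightarrow> i' \<le> j \<Longrightarrow> i \<noteq> i' \<Longrightarrow>
  (V i)\<^sup>T * V i' = 0\<^sub>m m m"
  unfolding orth_upto_def by auto

lemma gram_V_mult:
  "1 \<le> j \<Longrightarrow> j \<le> l \<Longrightarrow> Ps \<in> carrier_mat m m \<Longrightarrow> (V j * Ps)\<^sup>T * (V j * Ps) = Ps\<^sup>T * Ps"
  using assoc_mult_mat_subst[OF _ _ V_orthonormal[of j]] V_carrier[of j]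
  by (simp add: transpose_mult' assoc_mult_mat')

lemma V_orth_pred: assumes "orth_upto j" "1 \<le> i" "i \<le> j" "j \<le> l" shows "(V i)\<^sup>T * V (i - 1) = 0\<^sub>m m m"
proof (cases "i = 1")
  case True thus ?thesis using V_0 V_carrier[of 1] assms by simp
next
  case False thus ?thesis using orth_uptoD[OF assms(1), of i "i - 1"] assms by auto
qed

lemma Om_eq_OmA: assumes "orth_upto j" "1 \<le> i" "i \<le> j" "j \<le> l" "i < l" shows "Om i = OmA i"
proof -
  have c: "V i \<in> carrier_mat n m" "V (i - 1) \<in> carrier_mat n m" "Gam (i - 1) \<in> carrier_mat m m"
    using assms by (auto intro!: V_carrier Gam_carrier)
  have "Om i = (V i)\<^sup>T * (A * V i) - (V i)\<^sup>T * V (i - 1) * (Gam (i - 1))\<^sup>T"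
    using QR_step(1)[of i] assms c A by (simp add: mult_minus_distrib_mat' assoc_mult_mat')
  also have "\<dots> = OmA i" using V_orth_pred[OF assms(1-3)] c A assms unfolding OmA_def
    by (simp add: assoc_mult_mat' right_minus_zero_mat')
  finally show ?thesis .
qed

lemma Res_eq: assumes "orth_upto j" "1 \<le> i" "i \<le> j" "j \<le> l" "i < l"
  shows "Res i = V (i + 1) * Gam i"
  using V_Suc_Gam_eq[of i] Om_eq_OmA[OF assms] assms unfolding Res_def by simp

lemma V_transpose_A_V_lower:
  assumes on: "orth_upto j" and j: "j \<le> l" and i: "1 \<le> i" "i < j"
  shows "(V i)\<^sup>T * (A * V j) = (Gam i)\<^sup>T * ((V (i + 1))\<^sup>T * V j)"
proof -
  have c: "V j \<in> carrier_mat n m" "V i \<in> carrier_mat n m" "V (i - 1) \<in> carrier_mat n m"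
    "Gam (i - 1) \<in> carrier_mat m m" "OmA i \<in> carrier_mat m m" "Gam i \<in> carrier_mat m m"
    "V (i + 1) \<in> carrier_mat n m"
    using i j by (auto intro!: V_carrier Gam_carrier OmA_carrier)
  have "Res i = V (i + 1) * Gam i" using Res_eq[OF on i(1) less_imp_le[OF i(2)] j] i j by simp
  hence AVi: "A * V i = V (i - 1) * (Gam (i - 1))\<^sup>T + V i * OmA i + V (i + 1) * Gam i"
    using A_V_eq[of i] i j by simp
  have "(V (i - 1))\<^sup>T * V j = 0\<^sub>m m m"
  proof (cases "i = 1")
    case True thus ?thesis using V_0 c by simp
  next
    case False thus ?thesis using orth_uptoD[OF on, of "i - 1" j] i j by auto
  qed
  moreover have "(V i)\<^sup>T * V j = 0\<^sub>m m m" using orth_uptoD[OF on i(1)] i j by simp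
  moreover have "(V i)\<^sup>T * (A * V j) = (A * V i)\<^sup>T * V j"
    using c A Asym by (simp add: transpose_mult' assoc_mult_mat')
  moreover have "(A * V i)\<^sup>T * V j = Gam (i - 1) * ((V (i - 1))\<^sup>T * V j) + (OmA i)\<^sup>T * ((V i)\<^sup>T * V j)
      + (Gam i)\<^sup>T * ((V (i + 1))\<^sup>T * V j)"
    unfolding AVi using c by (simp add: mat_distrib_dims assoc_mult_mat')
  ultimately show ?thesis using c by (simp add: left_add_zero_mat')
qed

lemma V_orth_Res:
  assumes on: "orth_upto j" and j: "1 \<le> j" "j \<le> l" and i: "1 \<le> i" "i \<le> j"
  shows "(V i)\<^sup>T * Res j = 0\<^sub>m m m"
proof -
  have c: "V j \<in> carrier_mat n m" "V (j - 1) \<in> carrier_mat n m" "Gam (j - 1) \<in> carrier_mat m m"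
    "OmA j \<in> carrier_mat m m" "V i \<in> carrier_mat n m"
    using j i by (auto intro!: V_carrier Gam_carrier OmA_carrier)
  have Res: "(V i)\<^sup>T * Res j
      = (V i)\<^sup>T * (A * V j) - (V i)\<^sup>T * V (j - 1) * (Gam (j - 1))\<^sup>T - (V i)\<^sup>T * V j * OmA j"
    unfolding Res_def using c A by (simp add: mult_minus_distrib_mat' assoc_mult_mat')
  consider "i = j" | "i + 1 = j" | "i + 1 < j" using i by linarith
  thus ?thesis
  proof cases
    case 1
    have "(V i)\<^sup>T * (A * V j) = OmA j" unfolding OmA_def 1 using c A by (simp add: assoc_mult_mat')
    thus ?thesis unfolding Res using V_orth_pred[OF on j(1) order.refl j(2)] V_orthonormal[OF j] c 1
      by (auto intro!: eq_matI)
  next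
    case 2
    have "(V i)\<^sup>T * (A * V j) = (Gam i)\<^sup>T"
      using V_transpose_A_V_lower[OF on j(2) i(1)] V_orthonormal[OF j] 2 Gam_carrier[of i] j by simp
    moreover have "(V i)\<^sup>T * V (j - 1) = 1\<^sub>m m" using V_orthonormal[of i] i j by (simp flip: 2)
    moreover have "(V i)\<^sup>T * V j = 0\<^sub>m m m" using orth_uptoD[OF on i(1)] 2 j by simp
    ultimately show ?thesis unfolding Res using c 2 Gam_carrier[of i] j by (auto intro!: eq_matI)
  next
    case 3
    have "(V (i + 1))\<^sup>T * V j = 0\<^sub>m m m" using orth_uptoD[OF on, of "i + 1" j] 3 j by simp
    hence "(V i)\<^sup>T * (A * V j) = 0\<^sub>m m m"
      using V_transpose_A_V_lower[OF on j(2) i(1)] 3 Gam_carrier[of i] j by simp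
    moreover have "(V i)\<^sup>T * V (j - 1) = 0\<^sub>m m m" using orth_uptoD[OF on i(1), of "j - 1"] 3 j by simp
    moreover have "(V i)\<^sup>T * V j = 0\<^sub>m m m" using orth_uptoD[OF on i(1)] 3 j by simp
    ultimately show ?thesis unfolding Res using c by (auto intro!: eq_matI)
  qed
qed

lemma orth_upto_SucI:
  assumes on: "orth_upto j" and j: "j + 1 \<le> l"
    and perp: "\<And>i. 1 \<le> i \<Longrightarrow> i \<le> j \<Longrightarrow> (V i)\<^sup>T * V (j + 1) = 0\<^sub>m m m"
  shows "orth_upto (j + 1)"
  unfolding orth_upto_def
proof (intro allI impI)
  fix i i' assume a: "1 \<le> i" "i \<le> j + 1" "1 \<le> i'" "i' \<le> j + 1"
  consider "i \<le> j" "i' \<le> j" | "i \<le> j" "i' = j + 1" | "i = j + 1" "i' \<le> j" | "i = j + 1" "i' = j + 1"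
    using a by linarith
  thus "(V i)\<^sup>T * V i' = (if i = i' then 1\<^sub>m m else 0\<^sub>m m m)"
  proof cases
    case 1 thus ?thesis using on a unfolding orth_upto_def by auto
  next
    case 2 thus ?thesis using perp a by simp
  next
    case 3
    have "(V i)\<^sup>T * V i' = ((V i')\<^sup>T * V (j + 1))\<^sup>T"
      using 3 V_carrier[of i'] V_carrier[of "j + 1"] j by (simp add: transpose_mult')
    thus ?thesis using perp[of i'] 3 a by simp
  next
    case 4 thus ?thesis using V_orthonormal[of "j + 1"] j by simp
  qed
qed

lemma orth_upto_Suc:
  assumes on: "orth_upto j" and j: "1 \<le> j" "j < l" and d: "det (Gam j) \<noteq> 0"
  shows "orth_upto (j + 1)"
proof (rule orth_upto_SucI[OF on])
  fix i assume i: "1 \<le> i" "i \<le> j"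
  have c: "V i \<in> carrier_mat n m" "V (j + 1) \<in> carrier_mat n m" "Gam j \<in> carrier_mat m m"
    using i j by (auto intro!: V_carrier Gam_carrier)
  have "(V i)\<^sup>T * V (j + 1) * Gam j = (V i)\<^sup>T * Res j"
    using Res_eq[OF on j(1) order.refl _ j(2)] j c by (simp add: assoc_mult_mat')
  also have "\<dots> = 0\<^sub>m m m" by (rule V_orth_Res[OF on j(1) _ i]) (use j in simp)
  finally have "(V i)\<^sup>T * V (j + 1) * Gam j = 0\<^sub>m m m" .
  from mult_nonsingular_eq_zero[OF _ c(3) d this] show "(V i)\<^sup>T * V (j + 1) = 0\<^sub>m m m" using c by simp
qed (use j in simp)

text \<open>\<open>Piv\<close> and \<open>Dir\<close> are \<open>D\<close> and \<open>Z\<close> of the proof sketch.\<close>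

definition Piv where "Piv = Delta Gam OmA"

primrec Dir where
  "Dir 0 = V 1"
| "Dir (Suc k) = V (k + 2) - Dir k * minv (Piv (k + 1)) * (Gam (k + 1))\<^sup>T"

lemma Piv_Suc: "Piv (Suc j)
    = (if j = 0 then OmA 1 else OmA (Suc j) - Gam j * minv (Piv j) * (Gam j)\<^sup>T)"
  unfolding Piv_def by simp

lemma Piv_carrier: "1 \<le> j \<Longrightarrow> j \<le> l \<Longrightarrow> Piv j \<in> carrier_mat m m"
proof (induct j)
  case 0 thus ?case by simp
next
  case (Suc j)
  show ?case
  proof (cases "j = 0")
    case True thus ?thesis using OmA_carrier[of 1] Suc l1 by (simp add: Piv_Suc)
  next
    case False
    have c: "Piv j \<in> carrier_mat m m" "OmA (Suc j) \<in> carrier_mat m m" "Gam j \<in> carrier_mat m m"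
      using Suc False by (auto intro!: OmA_carrier Gam_carrier)
    have c2: "minv (Piv j) \<in> carrier_mat m m" by (rule minv_carrier[OF c(1)])
    show ?thesis unfolding Piv_Suc using False c c2 by (intro carrier_matI) simp_all
  qed
qed

lemma Dir_carrier: "k < l \<Longrightarrow> Dir k \<in> carrier_mat n m"
proof (induct k)
  case 0 thus ?case using V_carrier[of 1] l1 by simp
next
  case (Suc k)
  have c: "Dir k \<in> carrier_mat n m" "V (k + 2) \<in> carrier_mat n m" "Piv (k + 1) \<in> carrier_mat m m"
    "Gam (k + 1) \<in> carrier_mat m m" using Suc by (auto intro!: V_carrier Gam_carrier Piv_carrier)
  have c2: "minv (Piv (k + 1)) \<in> carrier_mat m m" by (rule minv_carrier[OF c(3)])
  show ?case using c c2 by (intro carrier_matI) simp_all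
qed

lemma Dir_orth: "k < l \<Longrightarrow> X \<in> carrier_mat n p \<Longrightarrow>
  (\<forall>i. 1 \<le> i \<longrightarrow> i \<le> k + 1 \<longrightarrow> (V i)\<^sup>T * X = 0\<^sub>m m p) \<Longrightarrow> (Dir k)\<^sup>T * X = 0\<^sub>m m p"
proof (induct k)
  case 0 thus ?case by simp
next
  case (Suc k)
  have c: "Dir k \<in> carrier_mat n m" "V (k + 2) \<in> carrier_mat n m" "Piv (k + 1) \<in> carrier_mat m m"
    "Gam (k + 1) \<in> carrier_mat m m" using Suc
      by (auto intro!: V_carrier Gam_carrier Piv_carrier Dir_carrier)
  have c2: "minv (Piv (k + 1)) \<in> carrier_mat m m" by (rule minv_carrier[OF c(3)])
  have z: "(Dir k)\<^sup>T * X = 0\<^sub>m m p" using Suc by auto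
  have v: "(V (k + 2))\<^sup>T * X = 0\<^sub>m m p" using Suc(4) by auto
  have "(Dir (Suc k))\<^sup>T * X
      = (V (k + 2))\<^sup>T * X - Gam (k + 1) * ((minv (Piv (k + 1)))\<^sup>T * ((Dir k)\<^sup>T * X))"
    using c c2 Suc(3) by (simp add: mat_distrib_dims assoc_mult_mat')
  also have "\<dots> = 0\<^sub>m m p" unfolding z v using c c2 by (intro eq_matI) auto
  finally show ?case .
qed

lemma Dir_V: "orth_upto (k + 1) \<Longrightarrow> k < l \<Longrightarrow> (Dir k)\<^sup>T * V (k + 1) = 1\<^sub>m m"
proof (induct k)
  case 0 thus ?case using V_orthonormal[of 1] l1 by simp
next
  case (Suc k)
  have c: "Dir k \<in> carrier_mat n m" "V (k + 2) \<in> carrier_mat n m" "Piv (k + 1) \<in> carrier_mat m m"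
    "Gam (k + 1) \<in> carrier_mat m m" using Suc
      by (auto intro!: V_carrier Gam_carrier Piv_carrier Dir_carrier)
  have c2: "minv (Piv (k + 1)) \<in> carrier_mat m m" by (rule minv_carrier[OF c(3)])
  have z: "(Dir k)\<^sup>T * V (k + 2) = 0\<^sub>m m m"
  proof (rule Dir_orth)
    show "k < l" "V (k + 2) \<in> carrier_mat n m" using Suc c by auto
    show "\<forall>i. 1 \<le> i \<longrightarrow> i \<le> k + 1 \<longrightarrow> (V i)\<^sup>T * V (k + 2) = 0\<^sub>m m m"
      using orth_uptoD[OF Suc(2), of _ "k + 2"] by auto
  qed
  have v: "(V (k + 2))\<^sup>T * V (k + 2) = 1\<^sub>m m" using V_orthonormal[of "k + 2"] Suc by simp
  have "(Dir (Suc k))\<^sup>T * V (Suc k + 1)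
      = (V (k + 2))\<^sup>T * V (k + 2) - Gam (k + 1) * ((minv (Piv (k + 1)))\<^sup>T * ((Dir k)\<^sup>T * V (k + 2)))"
    using c c2 by (simp add: mat_distrib_dims assoc_mult_mat')
  also have "\<dots> = 1\<^sub>m m" unfolding z v using c c2 by (intro eq_matI) auto
  finally show ?case .
qed

lemma Dir_energy_if_A_Dir: assumes on: "orth_upto (k + 1)" and k: "k < l"
  and az: "A * Dir k = V (k + 1) * Piv (k + 1) + Res (k + 1)"
  shows "(Dir k)\<^sup>T * A * Dir k = Piv (k + 1)" "pos_def m (Piv (k + 1))"
proof -
  have c: "Dir k \<in> carrier_mat n m" "V (k + 1) \<in> carrier_mat n m" "Piv (k + 1) \<in> carrier_mat m m"
    "Res (k + 1) \<in> carrier_mat n m" using k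
      by (auto intro!: V_carrier Piv_carrier Dir_carrier Res_carrier)
  have zf: "(Dir k)\<^sup>T * Res (k + 1) = 0\<^sub>m m m"
  proof (rule Dir_orth[OF k c(4)])
    show "\<forall>i. 1 \<le> i \<longrightarrow> i \<le> k + 1 \<longrightarrow> (V i)\<^sup>T * Res (k + 1) = 0\<^sub>m m m"
      using V_orth_Res[OF on] k by auto
  qed
  have zv: "(Dir k)\<^sup>T * V (k + 1) = 1\<^sub>m m" by (rule Dir_V[OF on k])
  have "(Dir k)\<^sup>T * A * Dir k = (Dir k)\<^sup>T * (A * Dir k)" using c A by (simp add: assoc_mult_mat')
  also have "\<dots> = (Dir k)\<^sup>T * V (k + 1) * Piv (k + 1) + (Dir k)\<^sup>T * Res (k + 1)"
    unfolding az using c by (simp add: mat_distrib_dims assoc_mult_mat')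
  also have "\<dots> = Piv (k + 1)" unfolding zv zf using c
    by (simp add: left_mult_one_mat' right_add_zero_mat')
  finally show e: "(Dir k)\<^sup>T * A * Dir k = Piv (k + 1)" .
  have "(V (k + 1))\<^sup>T * Dir k = 1\<^sub>m m"
    using arg_cong[OF zv, of transpose_mat] c by (simp add: transpose_mult')
  from pos_def_congruence[OF Apd c(1) _ this] show "pos_def m (Piv (k + 1))"
    unfolding e using c by simp
qed

lemma A_Dir: "orth_upto (k + 1) \<Longrightarrow> k < l \<Longrightarrow> A * Dir k = V (k + 1) * Piv (k + 1) + Res (k + 1)"
proof (induct k)
  case 0
  have c: "V 1 \<in> carrier_mat n m" "Gam 0 \<in> carrier_mat m m" "OmA 1 \<in> carrier_mat m m"
    "Res 1 \<in> carrier_mat n m" using l1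
      by (auto intro!: V_carrier Gam_carrier OmA_carrier Res_carrier)
  show ?case using A_V_eq[of 1] l1 V_0 c by (simp add: Piv_Suc left_add_zero_mat')
next
  case (Suc k)
  have on1: "orth_upto (k + 1)" using orth_upto_mono[OF Suc(2)] by simp
  have k: "k < l" "Suc k < l" using Suc by auto
  have az: "A * Dir k = V (k + 1) * Piv (k + 1) + Res (k + 1)" by (rule Suc(1)[OF on1 k(1)])
  have dD: "det (Piv (k + 1)) \<noteq> 0"
    by (rule pos_def_det[OF Dir_energy_if_A_Dir(2)[OF on1 k(1) az]])
  have c: "Dir k \<in> carrier_mat n m" "V (k + 1) \<in> carrier_mat n m" "V (k + 2) \<in> carrier_mat n m"
    "Piv (k + 1) \<in> carrier_mat m m" "Gam (k + 1) \<in> carrier_mat m m" "OmA (k + 2) \<in> carrier_mat m m"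
    "Res (k + 2) \<in> carrier_mat n m"
    using k by (auto intro!: V_carrier Gam_carrier Piv_carrier Dir_carrier OmA_carrier Res_carrier)
  have c2: "minv (Piv (k + 1)) \<in> carrier_mat m m" by (rule minv_carrier[OF c(4)])
  have Fk: "Res (k + 1) = V (k + 2) * Gam (k + 1)"
    using Res_eq[OF Suc(2), of "k + 1"] k by simp
  have e1: "A * Dir (Suc k) = A * V (k + 2) - A * (Dir k * (minv (Piv (k + 1)) * (Gam (k + 1))\<^sup>T))"
    using c c2 A by (simp add: mat_distrib_dims assoc_mult_mat')
  have canc: "Piv (k + 1) * (minv (Piv (k + 1)) * (Gam (k + 1))\<^sup>T) = (Gam (k + 1))\<^sup>T"
    using minv_cancel(1)[OF c(4) dD] c by simp
  have e2: "A * (Dir k * (minv (Piv (k + 1)) * (Gam (k + 1))\<^sup>T))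
      = V (k + 1) * (Gam (k + 1))\<^sup>T
        + V (k + 2) * (Gam (k + 1) * (minv (Piv (k + 1)) * (Gam (k + 1))\<^sup>T))"
  proof -
    have "A * (Dir k * (minv (Piv (k + 1)) * (Gam (k + 1))\<^sup>T))
        = (A * Dir k) * (minv (Piv (k + 1)) * (Gam (k + 1))\<^sup>T)"
      using c c2 A by (simp add: assoc_mult_mat')
    also have "\<dots> = V (k + 1) * (Piv (k + 1) * (minv (Piv (k + 1)) * (Gam (k + 1))\<^sup>T))
       + V (k + 2) * (Gam (k + 1) * (minv (Piv (k + 1)) * (Gam (k + 1))\<^sup>T))"
      unfolding az Fk using c c2 by (simp add: mat_distrib_dims assoc_mult_mat')
    finally show ?thesis unfolding canc .
  qed
  have e3: "A * V (k + 2) = V (k + 1) * (Gam (k + 1))\<^sup>T + V (k + 2) * OmA (k + 2) + Res (k + 2)"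
    using A_V_eq[of "k + 2"] k by simp
  have e4: "V (Suc k + 1) * Piv (Suc k + 1)
      = V (k + 2) * OmA (k + 2) - V (k + 2) * (Gam (k + 1) * (minv (Piv (k + 1)) * (Gam (k + 1))\<^sup>T))"
    using c c2 by (simp add: Piv_Suc mat_distrib_dims assoc_mult_mat')
  show ?case unfolding e1 e2 e3 e4 using c c2 by (simp add: add_add_minus_add_mat[of _ n m])
qed

lemma Dir_energy: "orth_upto (k + 1) \<Longrightarrow> k < l \<Longrightarrow> (Dir k)\<^sup>T * A * Dir k = Piv (k + 1)"
  using Dir_energy_if_A_Dir(1)[OF _ _ A_Dir] .

lemma Piv_pos_def: "orth_upto (k + 1) \<Longrightarrow> k < l \<Longrightarrow> pos_def m (Piv (k + 1))"
  using Dir_energy_if_A_Dir(2)[OF _ _ A_Dir] .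

end

section \<open>Block conjugate gradient as block Lanczos\<close>

lemma bcg_0: "bcgR A B X0 0 = B - A * X0" "bcgP A B X0 0 = B - A * X0"
  unfolding bcgR_def bcgP_def by simp_all

lemma bcg_Suc:
  "bcgR A B X0 (Suc k) = bcgR A B X0 k - A * bcgP A B X0 k * bcgUps A B X0 k"
  "bcgP A B X0 (Suc k) = bcgR A B X0 (Suc k) + bcgP A B X0 k *
     (minv ((bcgR A B X0 k)\<^sup>T * bcgR A B X0 k) * ((bcgR A B X0 (Suc k))\<^sup>T * bcgR A B X0 (Suc k)))"
  by (cases "bcg A B X0 k"; simp add: bcgR_def bcgP_def bcgUps_def Let_def)+

locale bcg_lanczos = block_lanczos n m l A "B - A * X0" V Gam Om
  for n m l and A B X0 :: "real mat" and V Gam Om +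
  assumes Rrank: "\<forall>k<l. full_col_rank (bcgR A B X0 k)"
begin

text \<open>\<open>Coef k\<close> is \<open>\<Psi>_k\<close> of the proof sketch.\<close>

primrec Coef where
  "Coef 0 = Gam 0"
| "Coef (Suc k) = (-1) \<cdot>\<^sub>m (Gam (Suc k) * minv (Piv (Suc k)) * Coef k)"

definition bcg_repr :: "nat \<Rightarrow> bool" where
  "bcg_repr k \<longleftrightarrow> bcgR A B X0 k = V (k + 1) * Coef k \<and> bcgP A B X0 k = Dir k * Coef k \<and>
     det (Coef k) \<noteq> 0"

lemma Coef_carrier: "k < l \<Longrightarrow> Coef k \<in> carrier_mat m m"
proof (induct k)
  case 0 thus ?case using Gam_carrier[of 0] by simp
next
  case (Suc k)
  have "Gam (Suc k) \<in> carrier_mat m m" "minv (Piv (Suc k)) \<in> carrier_mat m m"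
    using Suc Piv_carrier[of "Suc k"] by (auto intro!: Gam_carrier minv_carrier)
  thus ?case using Suc by simp
qed

lemma bcgUps_eq_of_repr:
  assumes on: "orth_upto (k + 1)" and k: "k < l" and repr: "bcg_repr k"
  shows "bcgUps A B X0 k = minv (Coef k) * (minv (Piv (k + 1)) * Coef k)"
proof -
  define Ps where "Ps = Coef k"
  define Dk where "Dk = Piv (k + 1)"
  have Rk: "bcgR A B X0 k = V (k + 1) * Ps" and Pk: "bcgP A B X0 k = Dir k * Ps"
    and dPs: "det Ps \<noteq> 0" using repr unfolding bcg_repr_def Ps_def by auto
  have dD: "det Dk \<noteq> 0" unfolding Dk_def by (rule pos_def_det[OF Piv_pos_def[OF on k]])
  have c: "Dir k \<in> carrier_mat n m" "Dk \<in> carrier_mat m m" "Ps \<in> carrier_mat m m"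
    using k unfolding Dk_def Ps_def by (auto intro!: Piv_carrier Dir_carrier Coef_carrier)
  have cMi: "minv Dk \<in> carrier_mat m m" and cPi: "minv Ps \<in> carrier_mat m m"
    using c by (auto intro!: minv_carrier)
  have dPsT: "det (Ps\<^sup>T) \<noteq> 0" using det_transpose[OF c(3)] dPs by simp
  have RtR: "(bcgR A B X0 k)\<^sup>T * bcgR A B X0 k = Ps\<^sup>T * Ps"
    unfolding Rk using gram_V_mult c k by simp
  have "(bcgP A B X0 k)\<^sup>T * A * bcgP A B X0 k = Ps\<^sup>T * (Dk * Ps)"
  proof -
    have "(Dir k)\<^sup>T * (A * (Dir k * Ps)) = ((Dir k)\<^sup>T * A * Dir k) * Ps" using c A
      by (simp add: assoc_mult_mat')
    thus ?thesis unfolding Pk Dir_energy[OF on k, folded Dk_def] using c A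
      by (simp add: transpose_mult' assoc_mult_mat')
  qed
  also have "minv \<dots> = minv Ps * (minv Dk * (minv Ps)\<^sup>T)"
    using minv_mult[of "Ps\<^sup>T" m "Dk * Ps"] minv_mult[OF c(2,3) dD dPs]
      det_mult_nonzero[OF c(2,3) dD dPs]
      dPsT c cPi cMi minv_transpose[OF c(3) dPs] by (simp add: assoc_mult_mat')
  finally show ?thesis
    unfolding bcgUps_def RtR Ps_def[symmetric] Dk_def[symmetric]
    using minv_transpose_cancel[OF c(3) dPs, of Ps] c cPi cMi by (simp add: assoc_mult_mat')
qed

lemma bcgR_Suc_eq_of_repr:
  assumes on: "orth_upto (k + 1)" and k: "Suc k < l" and repr: "bcg_repr k"
  shows "bcgR A B X0 (Suc k) = V (Suc k + 1) * Coef (Suc k)"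
proof -
  define Ps where "Ps = Coef k"
  define Dk where "Dk = Piv (k + 1)"
  define G where "G = Gam (k + 1)"
  have Rk: "bcgR A B X0 k = V (k + 1) * Ps" and Pk: "bcgP A B X0 k = Dir k * Ps"
    and dPs: "det Ps \<noteq> 0" using repr unfolding bcg_repr_def Ps_def by auto
  have dD: "det Dk \<noteq> 0" unfolding Dk_def
    by (rule pos_def_det[OF Piv_pos_def[OF on]]) (use k in simp)
  have c: "Dir k \<in> carrier_mat n m" "V (k + 1) \<in> carrier_mat n m" "V (k + 2) \<in> carrier_mat n m"
    "Dk \<in> carrier_mat m m" "G \<in> carrier_mat m m" "Ps \<in> carrier_mat m m"
    using k unfolding G_def Dk_def Ps_def
      by (auto intro!: V_carrier Gam_carrier Piv_carrier Dir_carrier Coef_carrier)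
  have cMi: "minv Dk \<in> carrier_mat m m" and cPi: "minv Ps \<in> carrier_mat m m"
    using c by (auto intro!: minv_carrier)
  have Res: "Res (k + 1) = V (k + 2) * G" unfolding G_def using Res_eq[OF on, of "k + 1"] k by simp
  have "bcgUps A B X0 k = minv Ps * (minv Dk * Ps)"
    using bcgUps_eq_of_repr[OF on _ repr] k unfolding Ps_def Dk_def by simp
  hence "A * bcgP A B X0 k * bcgUps A B X0 k = A * (Dir k * (Ps * (minv Ps * (minv Dk * Ps))))"
    unfolding Pk using c cPi cMi A by (simp add: assoc_mult_mat')
  also have "\<dots> = (A * Dir k) * (minv Dk * Ps)"
    using minv_cancel(1)[OF c(6) dPs, of "minv Dk * Ps"] c cMi A by (simp add: assoc_mult_mat')
  also have "A * Dir k = V (k + 1) * Dk + V (k + 2) * G"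
    using A_Dir[OF on] k unfolding Dk_def Res by simp
  also have "(V (k + 1) * Dk + V (k + 2) * G) * (minv Dk * Ps)
      = V (k + 1) * (Dk * (minv Dk * Ps)) + V (k + 2) * (G * (minv Dk * Ps))"
    using c cMi by (simp add: mat_distrib_dims assoc_mult_mat')
  also have "\<dots> = V (k + 1) * Ps + V (k + 2) * (G * (minv Dk * Ps))"
    using minv_cancel(1)[OF c(4) dD, of Ps] c by simp
  finally have "bcgR A B X0 (Suc k)
      = V (k + 1) * Ps - (V (k + 1) * Ps + V (k + 2) * (G * (minv Dk * Ps)))"
    unfolding bcg_Suc(1) Rk by simp
  also have "\<dots> = (-1) \<cdot>\<^sub>m (V (k + 2) * (G * (minv Dk * Ps)))"
    using c cMi by (intro minus_add_smult_mat(1)[of _ n m]) auto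
  also have "\<dots> = V (Suc k + 1) * Coef (Suc k)"
    unfolding G_def Dk_def Ps_def using c cMi unfolding G_def Dk_def Ps_def
    by (simp add: mult_smult_distrib' assoc_mult_mat')
  finally show ?thesis .
qed

lemma det_Coef_Suc:
  assumes k: "Suc k < l" and R: "bcgR A B X0 (Suc k) = V (Suc k + 1) * Coef (Suc k)"
  shows "det (Coef (Suc k)) \<noteq> 0"
proof -
  have c: "V (k + 2) \<in> carrier_mat n m" "Coef (Suc k) \<in> carrier_mat m m"
    using k Coef_carrier[OF k] by (auto intro: V_carrier)
  have "det ((bcgR A B X0 (Suc k))\<^sup>T * bcgR A B X0 (Suc k)) \<noteq> 0"
    by (rule full_col_rank_det_gram[of _ n m]) (use Rrank k R c in auto)
  hence "det ((Coef (Suc k))\<^sup>T * Coef (Suc k)) \<noteq> 0" unfolding R using gram_V_mult c k by simp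
  thus ?thesis using det_nonzero_if_gram[OF c(2)] by simp
qed

lemma bcgP_Suc_eq_of_repr:
  assumes on: "orth_upto (k + 1)" and k: "Suc k < l" and repr: "bcg_repr k"
    and R: "bcgR A B X0 (Suc k) = V (Suc k + 1) * Coef (Suc k)"
  shows "bcgP A B X0 (Suc k) = Dir (Suc k) * Coef (Suc k)"
proof -
  define Ps where "Ps = Coef k"
  define Ps' where "Ps' = Coef (Suc k)"
  define Mi where "Mi = minv (Piv (k + 1))"
  define G where "G = Gam (k + 1)"
  have Rk: "bcgR A B X0 k = V (k + 1) * Ps" and Pk: "bcgP A B X0 k = Dir k * Ps"
    and dPs: "det Ps \<noteq> 0" using repr unfolding bcg_repr_def Ps_def by auto
  have pdD: "pos_def m (Piv (k + 1))" by (rule Piv_pos_def[OF on]) (use k in simp)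
  have c: "Dir k \<in> carrier_mat n m" "V (k + 2) \<in> carrier_mat n m" "G \<in> carrier_mat m m"
    "Ps \<in> carrier_mat m m" "Ps' \<in> carrier_mat m m" "Mi \<in> carrier_mat m m"
    using k pos_def_minv[OF pdD] Coef_carrier[OF k] unfolding G_def Ps_def Ps'_def Mi_def
    by (auto intro!: V_carrier Gam_carrier Dir_carrier Coef_carrier)
  have cPi: "minv Ps \<in> carrier_mat m m" using c by (auto intro!: minv_carrier)
  have Mi_sym: "Mi\<^sup>T = Mi" unfolding Mi_def using pos_def_minv[OF pdD] by simp
  have Ps': "Ps' = (-1) \<cdot>\<^sub>m (G * (Mi * Ps))"
    unfolding Ps'_def Ps_def Mi_def G_def using c unfolding Ps_def Mi_def G_def
      by (simp add: assoc_mult_mat')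
  have Ps'T: "Ps'\<^sup>T = (-1) \<cdot>\<^sub>m (Ps\<^sup>T * (Mi * G\<^sup>T))"
    unfolding Ps' using c Mi_sym by (simp add: transpose_mult' transpose_smult_mat assoc_mult_mat')
  have Xi: "minv ((bcgR A B X0 k)\<^sup>T * bcgR A B X0 k) * ((bcgR A B X0 (Suc k))\<^sup>T * bcgR A B X0 (Suc k))
      = (-1) \<cdot>\<^sub>m (minv Ps * (Mi * (G\<^sup>T * Ps')))"
  proof -
    have dPsT: "det (Ps\<^sup>T) \<noteq> 0" using det_transpose[OF c(4)] dPs by simp
    have "minv ((bcgR A B X0 k)\<^sup>T * bcgR A B X0 k) = minv Ps * (minv Ps)\<^sup>T"
      unfolding Rk using gram_V_mult[of "k + 1" Ps] minv_mult[OF _ c(4) dPsT dPs]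
        minv_transpose[OF c(4) dPs]
        c k by simp
    hence "minv ((bcgR A B X0 k)\<^sup>T * bcgR A B X0 k) * ((bcgR A B X0 (Suc k))\<^sup>T * bcgR A B X0 (Suc k))
       = minv Ps * ((minv Ps)\<^sup>T * (Ps\<^sup>T * ((-1) \<cdot>\<^sub>m (Mi * (G\<^sup>T * Ps')))))"
      unfolding R Ps'_def[symmetric] using gram_V_mult[of "Suc k + 1" Ps'] k c cPi
      unfolding Ps'T by (simp add: assoc_mult_mat' mult_smult_distrib' mult_smult_assoc_mat')
    also have "\<dots> = (-1) \<cdot>\<^sub>m (minv Ps * (Mi * (G\<^sup>T * Ps')))"
      using minv_transpose_cancel[OF c(4) dPs, of "(-1) \<cdot>\<^sub>m (Mi * (G\<^sup>T * Ps'))"] c cPi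
      by (simp add: mult_smult_distrib')
    finally show ?thesis .
  qed
  have "bcgP A B X0 (Suc k)
      = V (k + 2) * Ps' + Dir k * (Ps * ((-1) \<cdot>\<^sub>m (minv Ps * (Mi * (G\<^sup>T * Ps')))))"
    unfolding bcg_Suc(2) Xi unfolding R Pk Ps'_def[symmetric] using c cPi
      by (simp add: assoc_mult_mat')
  also have "\<dots> = V (k + 2) * Ps' + (-1) \<cdot>\<^sub>m (Dir k * (Mi * (G\<^sup>T * Ps')))"
    using minv_cancel(1)[OF c(4) dPs, of "Mi * (G\<^sup>T * Ps')"] c cPi by (simp add: mult_smult_distrib')
  also have "\<dots> = V (k + 2) * Ps' - Dir k * (Mi * (G\<^sup>T * Ps'))"
    using c by (intro minus_add_smult_mat(2)[of _ n m]) auto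
  also have "\<dots> = Dir (Suc k) * Ps'"
    unfolding Mi_def G_def using c unfolding Mi_def G_def
      by (simp add: mat_distrib_dims assoc_mult_mat')
  finally show ?thesis unfolding Ps'_def .
qed

lemma bcg_lanczos_repr: "k < l \<Longrightarrow> orth_upto (k + 1) \<and> bcg_repr k"
proof (induct k)
  case 0
  have c: "V 1 \<in> carrier_mat n m" "Gam 0 \<in> carrier_mat m m" using l1
    by (auto intro!: V_carrier Gam_carrier)
  have R: "bcgR A B X0 0 = V 1 * Gam 0" "bcgP A B X0 0 = V 1 * Gam 0" using bcg_0 R0_eq by auto
  have "det ((bcgR A B X0 0)\<^sup>T * bcgR A B X0 0) \<noteq> 0"
    by (rule full_col_rank_det_gram[of _ n m]) (use Rrank l1 c R in auto)
  hence "det (Gam 0) \<noteq> 0" unfolding R(1) using gram_V_mult[of 1] det_nonzero_if_gram[OF c(2)] l1 c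
    by simp
  moreover have "orth_upto 1" unfolding orth_upto_def using V_orthonormal[of 1] l1 by auto
  ultimately show ?case using R unfolding bcg_repr_def by simp
next
  case (Suc k)
  hence k: "Suc k < l" and on: "orth_upto (k + 1)" and repr: "bcg_repr k" by auto
  have R: "bcgR A B X0 (Suc k) = V (Suc k + 1) * Coef (Suc k)"
    by (rule bcgR_Suc_eq_of_repr[OF on k repr])
  have d: "det (Coef (Suc k)) \<noteq> 0" by (rule det_Coef_Suc[OF k R])
  have "det (Gam (k + 1)) \<noteq> 0"
  proof
    assume "det (Gam (k + 1)) = 0"
    moreover have "Gam (Suc k) \<in> carrier_mat m m" "minv (Piv (Suc k)) * Coef k \<in> carrier_mat m m"
      using k minv_carrier[OF Piv_carrier[of "Suc k"]] Coef_carrier[of k]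
        by (auto intro!: Gam_carrier)
    ultimately have "det (Gam (Suc k) * (minv (Piv (Suc k)) * Coef k)) = 0"
      using det_mult[of "Gam (Suc k)" m] by simp
    moreover have "Gam (Suc k) * minv (Piv (Suc k)) * Coef k
        = Gam (Suc k) * (minv (Piv (Suc k)) * Coef k)"
      using k minv_carrier[OF Piv_carrier[of "Suc k"]] Coef_carrier[of k] Gam_carrier[of "Suc k"]
      by (auto intro!: assoc_mult_mat)
    ultimately have "det (Coef (Suc k)) = 0" by simp
    thus False using d by simp
  qed
  hence "orth_upto (Suc k + 1)" using orth_upto_Suc[of "k + 1"] on k by simp
  thus ?case using R d bcgP_Suc_eq_of_repr[OF on k repr R] unfolding bcg_repr_def by simp
qed

lemma orth_upto_l: "orth_upto l"
  using bcg_lanczos_repr[of "l - 1"] l1 by simp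

lemma orth_upto_below: "j \<le> l \<Longrightarrow> orth_upto j"
  by (rule orth_upto_mono[OF orth_upto_l])

lemma Delta_eq_Piv: "1 \<le> j \<Longrightarrow> j < l \<Longrightarrow> Delta Gam Om j = Piv j"
proof (induct j)
  case 0 thus ?case by simp
next
  case (Suc j)
  show ?case
  proof (cases j)
    case 0 thus ?thesis unfolding Piv_def using Om_eq_OmA[OF orth_upto_l, of 1] Suc by simp
  next
    case (Suc j')
    hence "Delta Gam Om j = Piv j" using Suc.hyps \<open>Suc j < l\<close> by simp
    thus ?thesis unfolding Piv_def using Om_eq_OmA[OF orth_upto_l, of "Suc j"] \<open>Suc j < l\<close> Suc by simp
  qed
qed

lemma Phi_eq_OmA: "k < l \<Longrightarrow> Phi Gam Om k = Phi Gam OmA k"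
proof (induct k)
  case 0 thus ?case by simp
next
  case (Suc k)
  have "Delta Gam Om (Suc k) = Delta Gam OmA (Suc k)" using Delta_eq_Piv[OF _ Suc(2)]
    unfolding Piv_def by simp
  thus ?case using Suc by simp
qed

lemma Phi_carrier: "k < l \<Longrightarrow> Phi Gam OmA k \<in> carrier_mat m m"
proof (induct k)
  case 0 thus ?case using Gam_carrier[of 0] by simp
next
  case (Suc k)
  have c: "Gam (Suc k) \<in> carrier_mat m m" "Delta Gam OmA (Suc k) \<in> carrier_mat m m"
    using Suc Piv_carrier[of "Suc k"] unfolding Piv_def by (auto intro!: Gam_carrier)
  have "minv (Delta Gam OmA (Suc k)) \<in> carrier_mat m m" by (rule minv_carrier[OF c(2)])
  thus ?case using Suc c by simp
qed

lemma Coef_eq_Phi: "k < l \<Longrightarrow> Coef k = (-1) ^ k \<cdot>\<^sub>m Phi Gam OmA k"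
proof (induct k)
  case 0 thus ?case using Gam_carrier[of 0] l1 by (intro eq_matI) auto
next
  case (Suc k)
  have c: "Gam (Suc k) \<in> carrier_mat m m" "Piv (Suc k) \<in> carrier_mat m m"
    "Phi Gam OmA k \<in> carrier_mat m m"
    using Suc Piv_carrier[of "Suc k"] Phi_carrier[of k] by (auto intro!: Gam_carrier)
  have c2: "minv (Piv (Suc k)) \<in> carrier_mat m m" by (rule minv_carrier[OF c(2)])
  have "Coef (Suc k) = (-1) \<cdot>\<^sub>m (Gam (Suc k) * minv (Piv (Suc k)) * ((-1) ^ k \<cdot>\<^sub>m Phi Gam OmA k))"
    using Suc by simp
  also have "\<dots> = (-1) ^ Suc k \<cdot>\<^sub>m (Gam (Suc k) * minv (Piv (Suc k)) * Phi Gam OmA k)"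
    using c c2 by (intro eq_matI) (auto simp: mult_smult_distrib')
  also have "\<dots> = (-1) ^ Suc k \<cdot>\<^sub>m Phi Gam OmA (Suc k)" unfolding Piv_def by simp
  finally show ?case .
qed

lemma bcgUps_eq: "k < l \<Longrightarrow> bcgUps A B X0 k = minv (Coef k) * (minv (Piv (k + 1)) * Coef k)"
  using bcgUps_eq_of_repr bcg_lanczos_repr by blast

lemma gram_bcgR: "k < l \<Longrightarrow> (bcgR A B X0 k)\<^sup>T * bcgR A B X0 k = (Coef k)\<^sup>T * Coef k"
  using bcg_lanczos_repr gram_V_mult[of "k + 1" "Coef k"] Coef_carrier unfolding bcg_repr_def
    by simp

lemma bcgTheta_eq: "k < l \<Longrightarrow> bcgTheta A B X0 k = (Coef k)\<^sup>T * (minv (Piv (k + 1)) * Coef k)"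
  unfolding bcgTheta_def gram_bcgR bcgUps_eq
  using minv_cancel(1)[OF Coef_carrier, of k "minv (Piv (k + 1)) * Coef k"]
    bcg_lanczos_repr[of k] Coef_carrier[of k] minv_carrier[OF Piv_carrier[of "k + 1"]]
    minv_carrier[OF Coef_carrier[of k]]
  unfolding bcg_repr_def by (simp add: assoc_mult_mat')

lemma Ups_mu_eq:
  assumes kl: "k < l" and X: "Delta_mu m Gam Om \<mu> k \<in> carrier_mat m m"
  shows "Ups_mu m Gam Om \<mu> k = minv (Coef k) * (minv (Delta_mu m Gam Om \<mu> k) * Coef k)"
proof -
  define s :: real where "s = (-1) ^ k"
  define Ph where "Ph = Phi Gam Om k"
  have s0: "s \<noteq> 0" unfolding s_def by simp
  have cPh: "Ph \<in> carrier_mat m m" unfolding Ph_def using Phi_eq_OmA[OF kl] Phi_carrier[OF kl]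
    by simp
  have Coef: "Coef k = s \<cdot>\<^sub>m Ph" unfolding Ph_def s_def using Coef_eq_Phi[OF kl] Phi_eq_OmA[OF kl]
    by simp
  have "det Ph \<noteq> 0" using bcg_lanczos_repr[OF kl] cPh unfolding bcg_repr_def Coef by simp
  hence "minv (Coef k) = (1 / s) \<cdot>\<^sub>m minv Ph" unfolding Coef by (rule minv_smult[OF cPh _ s0])
  hence "minv (Coef k) * (minv (Delta_mu m Gam Om \<mu> k) * Coef k)
      = ((1 / s) * s) \<cdot>\<^sub>m (minv Ph * (minv (Delta_mu m Gam Om \<mu> k) * Ph))"
    unfolding Coef using minv_carrier[OF cPh] minv_carrier[OF X] cPh
    by (intro eq_matI) (auto simp: mult_smult_distrib' mult_smult_assoc_mat')
  also have "\<dots> = Ups_mu m Gam Om \<mu> k"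
    unfolding Ups_mu_def Ph_def[symmetric] using s0 minv_carrier[OF cPh] minv_carrier[OF X] cPh
    by (intro eq_matI) (auto simp: assoc_mult_mat')
  finally show ?thesis ..
qed

lemma Theta_mu_eq:
  assumes kl: "k < l" and X: "Delta_mu m Gam Om \<mu> k \<in> carrier_mat m m"
  shows "Theta_mu A B X0 m Gam Om \<mu> k = (Coef k)\<^sup>T * (minv (Delta_mu m Gam Om \<mu> k) * Coef k)"
  unfolding Theta_mu_def gram_bcgR[OF kl] Ups_mu_eq[OF kl X]
  using minv_cancel(1)[OF Coef_carrier[OF kl], of "minv (Delta_mu m Gam Om \<mu> k) * Coef k"]
    bcg_lanczos_repr[OF kl] Coef_carrier[OF kl] minv_carrier[OF X]
      minv_carrier[OF Coef_carrier[OF kl]]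
  unfolding bcg_repr_def by (simp add: assoc_mult_mat')

end

section \<open>Concatenated Lanczos bases\<close>

text \<open>\<open>hcat n m V k\<close> is \<open>\<V>_k = (V_1, \<dots>, V_k)\<close> and \<open>Eblk m k j\<close> is \<open>E_j = e_j \<otimes> I_m\<close>.\<close>

definition hcat :: "nat \<Rightarrow> nat \<Rightarrow> (nat \<Rightarrow> real mat) \<Rightarrow> nat \<Rightarrow> real mat" where
  "hcat n m W k = mat n (k * m) (\<lambda>(r, c). W (c div m + 1) $$ (r, c mod m))"

definition Eblk :: "nat \<Rightarrow> nat \<Rightarrow> nat \<Rightarrow> real mat" where
  "Eblk m k j = mat (k * m) m (\<lambda>(i, c). if i div m + 1 = j \<and> i mod m = c then 1 else 0)"

lemma hcat_carrier[simp]: "hcat n m W k \<in> carrier_mat n (k * m)" unfolding hcat_def by simp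

lemma hcat_dim[simp]: "dim_row (hcat n m W k) = n" "dim_col (hcat n m W k) = k * m"
  unfolding hcat_def by simp_all

lemma Eblk_carrier[simp]: "Eblk m k j \<in> carrier_mat (k * m) m" unfolding Eblk_def by simp

lemma Eblk_dim[simp]: "dim_row (Eblk m k j) = k * m" "dim_col (Eblk m k j) = m"
  unfolding Eblk_def by simp_all

lemma Tmat_carrier: "Tmat m Gam Om k \<in> carrier_mat (k * m) (k * m)" unfolding Tmat_def by simp

lemma block_index_bounds: assumes "i < k * (m::nat)" shows "i div m < k" "i mod m < m" "m > 0"
proof -
  show "m > 0" using assms by (cases "m = 0") auto
  thus "i mod m < m" by simp
  show "i div m < k" using assms by (simp add: less_mult_imp_div_less)
qed

lemma hcat_transpose_mult_index:
  assumes W: "\<And>b. 1 \<le> b \<Longrightarrow> b \<le> k \<Longrightarrow> W b \<in> carrier_mat n m"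
    and X: "X \<in> carrier_mat n p" and i: "i < k * m" and c: "c < p"
  shows "((hcat n m W k)\<^sup>T * X) $$ (i, c) = ((W (i div m + 1))\<^sup>T * X) $$ (i mod m, c)"
proof -
  note b = block_index_bounds[OF i]
  have Wc: "W (i div m + 1) \<in> carrier_mat n m" using W b by simp
  show ?thesis using X i c b Wc unfolding hcat_def
    by (simp add: scalar_prod_def row_def col_def)
qed

lemma mult_hcat_index:
  assumes W: "\<And>b. 1 \<le> b \<Longrightarrow> b \<le> k \<Longrightarrow> W b \<in> carrier_mat n m"
    and Y: "Y \<in> carrier_mat p n" and j: "j < k * m" and c: "c < p"
  shows "(Y * hcat n m W k) $$ (c, j) = (Y * W (j div m + 1)) $$ (c, j mod m)"
proof -
  note b = block_index_bounds[OF j]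
  have Wc: "W (j div m + 1) \<in> carrier_mat n m" using W b by simp
  show ?thesis using Y j c b Wc unfolding hcat_def
    by (simp add: scalar_prod_def row_def col_def)
qed

lemma sum_indicator:
  assumes "t0 < (N::nat)"
  shows "(\<Sum>t = 0..<N. f t * (if t = t0 then 1 else 0)) = (f t0 :: real)"
proof -
  have "(\<Sum>t = 0..<N. f t * (if t = t0 then 1 else 0)) = (\<Sum>t = 0..<N. if t = t0 then f t else 0)"
    by (rule sum.cong) auto
  also have "\<dots> = f t0" using assms by (simp add: sum.delta)
  finally show ?thesis .
qed

lemma Eblk_index: assumes c: "c < m" and t: "t < k * m"
  shows "Eblk m k j $$ (t, c) = (if t = (j - 1) * m + c \<and> 1 \<le> j then 1 else 0)"
proof -
  note b = block_index_bounds[OF t]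
  have "(t div m + 1 = j \<and> t mod m = c) \<longleftrightarrow> (t = (j - 1) * m + c \<and> 1 \<le> j)"
  proof
    assume h: "t div m + 1 = j \<and> t mod m = c"
    hence "j - 1 = t div m" "t mod m = c" by auto
    hence "t = (j - 1) * m + c" using div_mult_mod_eq[of t m] by simp
    thus "t = (j - 1) * m + c \<and> 1 \<le> j" using h by simp
  next
    assume h: "t = (j - 1) * m + c \<and> 1 \<le> j"
    thus "t div m + 1 = j \<and> t mod m = c" using c by simp
  qed
  thus ?thesis unfolding Eblk_def using c t by simp
qed

lemma hcat_mult_Eblk:
  assumes W: "\<And>b. 1 \<le> b \<Longrightarrow> b \<le> k \<Longrightarrow> W b \<in> carrier_mat n m"
    and j: "1 \<le> j" "j \<le> k"
  shows "hcat n m W k * Eblk m k j = W j"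
proof (rule eq_matI)
  have Wj: "W j \<in> carrier_mat n m" using W j by simp
  show "dim_row (hcat n m W k * Eblk m k j) = dim_row (W j)"
    "dim_col (hcat n m W k * Eblk m k j) = dim_col (W j)"
    using Wj by auto
  fix r c assume "r < dim_row (W j)" "c < dim_col (W j)"
  hence r: "r < n" and c: "c < m" using Wj by auto
  define t0 where "t0 = (j - 1) * m + c"
  have t0: "t0 < k * m"
  proof -
    have "t0 < (j - 1) * m + m" unfolding t0_def using c by simp
    also have "\<dots> = j * m" using j by (cases j) auto
    also have "\<dots> \<le> k * m" using j by simp
    finally show ?thesis .
  qed
  have t0d: "t0 div m = j - 1" "t0 mod m = c" unfolding t0_def using c by auto
  have "(hcat n m W k * Eblk m k j) $$ (r, c)
      = (\<Sum>t = 0..<k * m. hcat n m W k $$ (r, t) * Eblk m k j $$ (t, c))"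
    using r c by (simp add: scalar_prod_def row_def col_def)
  also have "\<dots> = (\<Sum>t = 0..<k * m. hcat n m W k $$ (r, t) * (if t = t0 then 1 else 0))"
    by (rule sum.cong) (use Eblk_index[OF c] j in \<open>auto simp: t0_def\<close>)
  also have "\<dots> = hcat n m W k $$ (r, t0)" by (rule sum_indicator[OF t0])
  also have "\<dots> = W j $$ (r, c)" unfolding hcat_def using r t0 t0d j by simp
  finally show "(hcat n m W k * Eblk m k j) $$ (r, c) = W j $$ (r, c)" .
qed

context block_lanczos
begin

lemma V_inner: assumes on: "orth_upto j" and jl: "j \<le> l" and a: "a \<le> j" and b: "b \<le> j"
  shows "(V a)\<^sup>T * V b = (if a = b \<and> 1 \<le> a then 1\<^sub>m m else 0\<^sub>m m m)"
proof -
  have ca: "V a \<in> carrier_mat n m" "V b \<in> carrier_mat n m" using a b jl by (auto intro!: V_carrier)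
  show ?thesis
  proof (cases "a = 0 \<or> b = 0")
    case True thus ?thesis using V_0 ca by auto
  next
    case False thus ?thesis using on a b unfolding orth_upto_def by auto
  qed
qed

lemma V_A_V_block:
  assumes on: "orth_upto (k + 1)" and k: "k < l" and i: "1 \<le> i" "i \<le> k + 1"
    and j: "1 \<le> j" "j \<le> k"
  shows "(V i)\<^sup>T * (A * V j) = (if i = j then OmA j else if i = j + 1 then Gam j
     else if j = i + 1 then (Gam i)\<^sup>T else 0\<^sub>m m m)"
proof -
  have c: "V i \<in> carrier_mat n m" "V (j - 1) \<in> carrier_mat n m" "V j \<in> carrier_mat n m"
    "V (j + 1) \<in> carrier_mat n m" "Gam (j - 1) \<in> carrier_mat m m" "Gam j \<in> carrier_mat m m"
    "OmA j \<in> carrier_mat m m" using i j k by (auto intro!: V_carrier Gam_carrier OmA_carrier)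
  have Fj: "Res j = V (j + 1) * Gam j" by (rule Res_eq[OF on j(1)]) (use j k in auto)
  have AVj: "A * V j = V (j - 1) * (Gam (j - 1))\<^sup>T + V j * OmA j + V (j + 1) * Gam j"
    using A_V_eq[of j] j k Fj by simp
  have e: "(V i)\<^sup>T * (A * V j) = ((V i)\<^sup>T * V (j - 1)) * (Gam (j - 1))\<^sup>T + ((V i)\<^sup>T * V j) * OmA j
      + ((V i)\<^sup>T * V (j + 1)) * Gam j"
    unfolding AVj using c by (simp add: mat_distrib_dims assoc_mult_mat')
  have v1: "(V i)\<^sup>T * V (j - 1) = (if i = j - 1 \<and> 1 \<le> i then 1\<^sub>m m else 0\<^sub>m m m)"
    by (rule V_inner[OF on]) (use i j k in auto)
  have v2: "(V i)\<^sup>T * V j = (if i = j \<and> 1 \<le> i then 1\<^sub>m m else 0\<^sub>m m m)"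
    by (rule V_inner[OF on]) (use i j k in auto)
  have v3: "(V i)\<^sup>T * V (j + 1) = (if i = j + 1 \<and> 1 \<le> i then 1\<^sub>m m else 0\<^sub>m m m)"
    by (rule V_inner[OF on]) (use i j k in auto)
  show ?thesis unfolding e v1 v2 v3 using c i j
    by (auto simp: right_add_zero_mat' left_add_zero_mat' left_mult_one_mat' intro!: eq_matI)
qed

lemma Vcat_orthonormal: assumes on: "orth_upto k" and kl: "k \<le> l"
  shows "(hcat n m V k)\<^sup>T * hcat n m V k = 1\<^sub>m (k * m)"
proof (rule eq_matI)
  fix a b assume "a < dim_row (1\<^sub>m (k * m))" "b < dim_col (1\<^sub>m (k * m))"
  hence a: "a < k * m" and b: "b < k * m" by auto
  note ia = block_index_bounds[OF a] and ib = block_index_bounds[OF b]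
  have W: "\<And>b. 1 \<le> b \<Longrightarrow> b \<le> k \<Longrightarrow> V b \<in> carrier_mat n m" using kl by (auto intro!: V_carrier)
  have cva: "V (a div m + 1) \<in> carrier_mat n m" using W ia by simp
  have "((hcat n m V k)\<^sup>T * hcat n m V k) $$ (a, b)
      = ((V (a div m + 1))\<^sup>T * hcat n m V k) $$ (a mod m, b)"
    by (rule hcat_transpose_mult_index[OF W _ a b]) auto
  also have "\<dots> = ((V (a div m + 1))\<^sup>T * V (b div m + 1)) $$ (a mod m, b mod m)"
    by (rule mult_hcat_index[OF W _ b ia(2)]) (use cva in auto)
  also have "\<dots>
      = (if a div m + 1 = b div m + 1 \<and> 1 \<le> a div m + 1 then 1\<^sub>m m else 0\<^sub>m m m) $$ (a mod m, b mod m)"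
    by (subst V_inner[OF on kl]) (use ia ib in auto)
  also have "\<dots> = 1\<^sub>m (k * m) $$ (a, b)"
  proof -
    have "a div m = b div m \<Longrightarrow> a mod m = b mod m \<Longrightarrow> a = b" by (metis div_mult_mod_eq)
    thus ?thesis using ia ib a b by auto
  qed
  finally show "((hcat n m V k)\<^sup>T * hcat n m V k) $$ (a, b) = 1\<^sub>m (k * m) $$ (a, b)" .
qed auto

lemma Vcat_transpose_mult_index: assumes kl: "k \<le> l" and X: "X \<in> carrier_mat n p"
  and M: "\<And>b. 1 \<le> b \<Longrightarrow> b \<le> k \<Longrightarrow> (V b)\<^sup>T * X = M b"
  and a: "a < k * m" and c: "c < p"
  shows "((hcat n m V k)\<^sup>T * X) $$ (a, c) = M (a div m + 1) $$ (a mod m, c)"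
proof -
  note ia = block_index_bounds[OF a]
  have W: "\<And>b. 1 \<le> b \<Longrightarrow> b \<le> k \<Longrightarrow> V b \<in> carrier_mat n m" using kl by (auto intro!: V_carrier)
  have "((hcat n m V k)\<^sup>T * X) $$ (a, c) = ((V (a div m + 1))\<^sup>T * X) $$ (a mod m, c)"
    by (rule hcat_transpose_mult_index[OF W X a c]) auto
  thus ?thesis using M ia by simp
qed

lemma Vcat_transpose_V: assumes on: "orth_upto k" and kl: "k \<le> l" and j: "1 \<le> j" "j \<le> k"
  shows "(hcat n m V k)\<^sup>T * V j = Eblk m k j"
proof (rule eq_matI)
  fix a c assume "a < dim_row (Eblk m k j)" "c < dim_col (Eblk m k j)"
  hence a: "a < k * m" and c: "c < m" by auto
  note ia = block_index_bounds[OF a]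
  have Vj: "V j \<in> carrier_mat n m" using j kl by (auto intro!: V_carrier)
  have "((hcat n m V k)\<^sup>T * V j) $$ (a, c)
      = (\<lambda>b. if b = j \<and> 1 \<le> b then 1\<^sub>m m else 0\<^sub>m m m) (a div m + 1) $$ (a mod m, c)"
    by (rule Vcat_transpose_mult_index[OF kl Vj _ a c], rule V_inner[OF on kl]) (use j in auto)
  also have "\<dots> = Eblk m k j $$ (a, c)"
    unfolding Eblk_def using a c ia by auto
  finally show "((hcat n m V k)\<^sup>T * V j) $$ (a, c) = Eblk m k j $$ (a, c)" .
qed (use V_carrier[of j] j kl in auto)

lemma Vcat_transpose_V_Suc: assumes on: "orth_upto (k + 1)" and kl: "k < l"
  shows "(hcat n m V k)\<^sup>T * V (k + 1) = 0\<^sub>m (k * m) m"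
proof (rule eq_matI)
  fix a c assume "a < dim_row (0\<^sub>m (k * m) m :: real mat)" "c < dim_col (0\<^sub>m (k * m) m :: real mat)"
  hence a: "a < k * m" and c: "c < m" by auto
  note ia = block_index_bounds[OF a]
  have V1: "V (k + 1) \<in> carrier_mat n m" using kl by (auto intro!: V_carrier)
  have "((hcat n m V k)\<^sup>T * V (k + 1)) $$ (a, c) = (0\<^sub>m m m :: real mat) $$ (a mod m, c)"
  proof (rule Vcat_transpose_mult_index[OF _ V1 _ a c])
    fix b assume "1 \<le> b" "b \<le> k"
    thus "(V b)\<^sup>T * V (k + 1) = 0\<^sub>m m m" using V_inner[OF on, of b "k + 1"] kl by auto
  qed (use kl in auto)
  thus "((hcat n m V k)\<^sup>T * V (k + 1)) $$ (a, c) = (0\<^sub>m (k * m) m :: real mat) $$ (a, c)" using ia a c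
    by simp
qed (use V_carrier[of "k + 1"] kl in auto)

lemma Vcat_energy: assumes on: "orth_upto (k + 1)" and kl: "k < l"
  shows "(hcat n m V k)\<^sup>T * A * hcat n m V k = Tmat m Gam Om k"
proof (rule eq_matI)
  fix a b assume "a < dim_row (Tmat m Gam Om k)" "b < dim_col (Tmat m Gam Om k)"
  hence a: "a < k * m" and b: "b < k * m" unfolding Tmat_def by auto
  note ia = block_index_bounds[OF a] and ib = block_index_bounds[OF b]
  have W: "\<And>b. 1 \<le> b \<Longrightarrow> b \<le> k \<Longrightarrow> V b \<in> carrier_mat n m" using kl by (auto intro!: V_carrier)
  have cva: "V (a div m + 1) \<in> carrier_mat n m" using W ia by simp
  have "((hcat n m V k)\<^sup>T * A * hcat n m V k) $$ (a, b)
      = ((hcat n m V k)\<^sup>T * (A * hcat n m V k)) $$ (a, b)"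
    using A by (simp add: assoc_mult_mat')
  also have "\<dots> = ((V (a div m + 1))\<^sup>T * (A * hcat n m V k)) $$ (a mod m, b)"
    by (rule hcat_transpose_mult_index[OF W _ a b]) (use A in auto)
  also have "\<dots> = (((V (a div m + 1))\<^sup>T * A) * hcat n m V k) $$ (a mod m, b)"
    using A cva by (simp add: assoc_mult_mat')
  also have "\<dots> = (((V (a div m + 1))\<^sup>T * A) * V (b div m + 1)) $$ (a mod m, b mod m)"
    by (rule mult_hcat_index[OF W _ b ia(2)]) (use cva A in auto)
  also have "\<dots> = ((V (a div m + 1))\<^sup>T * (A * V (b div m + 1))) $$ (a mod m, b mod m)"
    using A cva W[of "b div m + 1"] ib by (simp add: assoc_mult_mat')
  also have "\<dots> = (if a div m + 1 = b div m + 1 then OmA (b div m + 1)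
      else if a div m + 1 = b div m + 1 + 1 then Gam (b div m + 1)
      else if b div m + 1 = a div m + 1 + 1 then (Gam (a div m + 1))\<^sup>T
      else 0\<^sub>m m m) $$ (a mod m, b mod m)"
    by (subst V_A_V_block[OF on kl]) (use ia ib in auto)
  also have "\<dots> = Tmat m Gam Om k $$ (a, b)"
  proof -
    have om: "Om (b div m + 1) = OmA (b div m + 1)" by (rule Om_eq_OmA[OF on]) (use ib kl in auto)
    show ?thesis unfolding Tmat_def Let_def using a b om ia ib by simp
  qed
  finally show "((hcat n m V k)\<^sup>T * A * hcat n m V k) $$ (a, b) = Tmat m Gam Om k $$ (a, b)" .
qed (auto simp: Tmat_def)

lemma Vcat_transpose_A_V_Suc: assumes on: "orth_upto (k + 1)" and kl: "k < l"
  shows "(hcat n m V k)\<^sup>T * (A * V (k + 1)) = Eblk m k k * (Gam k)\<^sup>T"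
proof (rule eq_matI)
  have Gk: "Gam k \<in> carrier_mat m m" using kl by (auto intro!: Gam_carrier)
  fix a c assume "a < dim_row (Eblk m k k * (Gam k)\<^sup>T)" "c < dim_col (Eblk m k k * (Gam k)\<^sup>T)"
  hence a: "a < k * m" and c: "c < m" using Gk by auto
  note ia = block_index_bounds[OF a]
  have V1: "V (k + 1) \<in> carrier_mat n m" using kl by (auto intro!: V_carrier)
  have blk1: "(V b)\<^sup>T * (A * V (k + 1)) = (if b = k then (Gam k)\<^sup>T else 0\<^sub>m m m)" if b: "1 \<le> b" "b \<le> k"
    for b
  proof -
    have cb: "V b \<in> carrier_mat n m" using b kl by (auto intro!: V_carrier)
    have "(V b)\<^sup>T * (A * V (k + 1)) = ((V (k + 1))\<^sup>T * (A * V b))\<^sup>T"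
      using cb V1 A Asym by (simp add: transpose_mult' assoc_mult_mat')
    also have "(V (k + 1))\<^sup>T * (A * V b) = (if k + 1 = b then OmA b else if k + 1 = b + 1 then Gam b
     else if b = k + 1 + 1 then (Gam (k + 1))\<^sup>T else 0\<^sub>m m m)"
      by (rule V_A_V_block[OF on kl]) (use b in auto)
    finally show ?thesis using b by auto
  qed
  have "((hcat n m V k)\<^sup>T * (A * V (k + 1))) $$ (a, c) =
    (\<lambda>b. if b = k then (Gam k)\<^sup>T else 0\<^sub>m m m) (a div m + 1) $$ (a mod m, c)"
    by (rule Vcat_transpose_mult_index[OF _ _ blk1 a c]) (use kl A V1 in auto)
  also have "\<dots> = (Eblk m k k * (Gam k)\<^sup>T) $$ (a, c)"
  proof (cases "a div m + 1 = k")
    case True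
    have "(Eblk m k k * (Gam k)\<^sup>T) $$ (a, c)
        = (\<Sum>t = 0..<m. (Gam k)\<^sup>T $$ (t, c) * (if t = a mod m then 1 else 0))"
      using a c Gk True unfolding Eblk_def
        by (simp add: scalar_prod_def row_def col_def mult.commute eq_commute[of "a mod m"])
    also have "\<dots> = (Gam k)\<^sup>T $$ (a mod m, c)" by (rule sum_indicator[OF ia(2)])
    finally show ?thesis using True by simp
  next
    case False
    have "(Eblk m k k * (Gam k)\<^sup>T) $$ (a, c) = (\<Sum>t = 0..<m. 0)"
      using a c Gk False unfolding Eblk_def by (simp add: scalar_prod_def row_def col_def)
    thus ?thesis using False ia c by simp
  qed
  finally show "((hcat n m V k)\<^sup>T * (A * V (k + 1))) $$ (a, c) = (Eblk m k k * (Gam k)\<^sup>T) $$ (a, c)" .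
qed (use Gam_carrier[of k] V_carrier[of "k + 1"] kl A in auto)

lemma Vcat_proj_Dir: assumes on: "orth_upto k" and kl: "k \<le> l" and j: "1 \<le> j" "j \<le> k"
  shows "hcat n m V k * ((hcat n m V k)\<^sup>T * Dir (j - 1)) = Dir (j - 1)"
  using j
proof (induct j)
  case 0 thus ?case by simp
next
  case (Suc j)
  have VJ: "hcat n m V k * ((hcat n m V k)\<^sup>T * V (Suc j)) = V (Suc j)"
    unfolding Vcat_transpose_V[OF on kl Suc(2,3)]
      by (rule hcat_mult_Eblk) (use kl Suc in \<open>auto intro!: V_carrier\<close>)
  show ?case
  proof (cases j)
    case 0 thus ?thesis using VJ by simp
  next
    case (Suc j')
    have j': "1 \<le> j" "j \<le> k" using Suc \<open>Suc j \<le> k\<close> by auto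
    have IH: "hcat n m V k * ((hcat n m V k)\<^sup>T * Dir (j - 1)) = Dir (j - 1)"
      by (rule Suc.hyps[OF j'])
    have c: "Dir (j - 1) \<in> carrier_mat n m" "V (Suc j) \<in> carrier_mat n m" "Piv j \<in> carrier_mat m m"
      "Gam j \<in> carrier_mat m m" using j' kl \<open>Suc j \<le> k\<close>
        by (auto intro!: V_carrier Gam_carrier Piv_carrier Dir_carrier)
    have c2: "minv (Piv j) \<in> carrier_mat m m" by (rule minv_carrier[OF c(3)])
    have Zs: "Dir (Suc j - 1) = V (Suc j) - Dir (j - 1) * minv (Piv j) * (Gam j)\<^sup>T"
      using Suc by simp
    have "hcat n m V k * ((hcat n m V k)\<^sup>T * Dir (Suc j - 1)) =
       hcat n m V k * ((hcat n m V k)\<^sup>T * V (Suc j)) - hcat n m V k * ((hcat n m V k)\<^sup>T * Dir (j - 1))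
         * (minv (Piv j) * (Gam j)\<^sup>T)"
      unfolding Zs using c c2 by (simp add: mat_distrib_dims assoc_mult_mat')
    also have "\<dots> = Dir (Suc j - 1)" unfolding VJ IH Zs using c c2 by (simp add: assoc_mult_mat')
    finally show ?thesis .
  qed
qed

lemma blk_eq_Eblk: assumes M: "M \<in> carrier_mat (k * m) (k * m)" and k1: "1 \<le> k"
  shows "blk m M k k = (Eblk m k k)\<^sup>T * M * Eblk m k k"
proof (rule eq_matI)
  fix a b assume "a < dim_row ((Eblk m k k)\<^sup>T * M * Eblk m k k)"
    "b < dim_col ((Eblk m k k)\<^sup>T * M * Eblk m k k)"
  hence a: "a < m" and b: "b < m" using M by auto
  define sa where "sa = (k - 1) * m + a"
  define sb where "sb = (k - 1) * m + b"
  have km: "k * m = (k - 1) * m + m" using k1 by (cases k) auto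
  have sa: "sa < k * m" "sb < k * m" unfolding sa_def sb_def km using a b by auto
  have "((Eblk m k k)\<^sup>T * M * Eblk m k k) $$ (a, b) = ((Eblk m k k)\<^sup>T * (M * Eblk m k k)) $$ (a, b)"
    using M by (simp add: assoc_mult_mat')
  also have "\<dots> = (\<Sum>s = 0..<k * m. (M * Eblk m k k) $$ (s, b) * (if s = sa then 1 else 0))"
    using a b M Eblk_index[OF a] k1 unfolding sa_def
    by (simp add: scalar_prod_def row_def col_def mult.commute cong: if_cong)
  also have "\<dots> = (M * Eblk m k k) $$ (sa, b)" by (rule sum_indicator[OF sa(1)])
  also have "\<dots> = (\<Sum>t = 0..<k * m. M $$ (sa, t) * (if t = sb then 1 else 0))"
    using a b M sa Eblk_index[OF b] k1 unfolding sb_def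
    by (simp add: scalar_prod_def row_def col_def cong: if_cong)
  also have "\<dots> = M $$ (sa, sb)" by (rule sum_indicator[OF sa(2)])
  also have "\<dots> = blk m M k k $$ (a, b)" unfolding blk_def sa_def sb_def using a b by simp
  finally show "blk m M k k $$ (a, b) = ((Eblk m k k)\<^sup>T * M * Eblk m k k) $$ (a, b)" by simp
qed (use M in \<open>auto simp: blk_def\<close>)

end

section \<open>The shifted pivots\<close>

locale bcg_lanczos_shift = bcg_lanczos n m l A B X0 V Gam Om
  for n m l and A B X0 :: "real mat" and V Gam Om +
  fixes \<mu> :: real
  assumes mu_pos: "0 < \<mu>" and mu_lt: "\<mu> < lambda_min A"
begin

definition Ashift where "Ashift = A - \<mu> \<cdot>\<^sub>m 1\<^sub>m n"

definition Hshift where "Hshift k = Tmat m Gam Om k - \<mu> \<cdot>\<^sub>m 1\<^sub>m (k * m)"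

definition Gbar where "Gbar k = (Eblk m k k)\<^sup>T * minv (Hshift k) * Eblk m k k"

lemma Ashift_carrier: "Ashift \<in> carrier_mat n n"
  unfolding Ashift_def using A by simp

lemma quad_form_Ashift: "X \<in> carrier_mat n 1 \<Longrightarrow> quad_form Ashift X = quad_form A X - \<mu> * sq_norm X"
  unfolding Ashift_def using quad_form_minus[OF A, of "\<mu> \<cdot>\<^sub>m 1\<^sub>m n" X] quad_form_smult_one by simp

lemma Ashift_pos_def: "pos_def n Ashift"
  unfolding pos_def_def
proof (intro conjI ballI impI)
  show "Ashift \<in> carrier_mat n n" by (rule Ashift_carrier)
  show "Ashift\<^sup>T = Ashift" unfolding Ashift_def using A Asym
    by (simp add: transpose_minus' transpose_smult_mat)
  fix X :: "real mat" assume "X \<in> carrier_mat n 1" "X \<noteq> 0\<^sub>m n 1"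
  thus "quad_form Ashift X > 0"
    using quad_form_gt_below_lambda_min[OF A Asym mu_lt] quad_form_Ashift by simp
qed

lemma orthonormal_compress_Ashift:
  assumes U: "U \<in> carrier_mat n q" and UU: "U\<^sup>T * U = 1\<^sub>m q"
  shows "U\<^sup>T * Ashift * U = U\<^sup>T * A * U - \<mu> \<cdot>\<^sub>m 1\<^sub>m q"
  unfolding Ashift_def using U UU A by (simp add: mat_distrib_dims assoc_mult_mat')

lemma Hshift_eq: "k < l \<Longrightarrow> Hshift k = (hcat n m V k)\<^sup>T * Ashift * hcat n m V k"
  unfolding Hshift_def
  using orthonormal_compress_Ashift[OF hcat_carrier Vcat_orthonormal[OF orth_upto_below]]
    Vcat_energy[OF orth_upto_below] by simp

lemma Hshift_pos_def: "k < l \<Longrightarrow> pos_def (k * m) (Hshift k)"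
  using pos_def_congruence[OF Ashift_pos_def hcat_carrier _ Vcat_orthonormal[OF orth_upto_below]]
    Hshift_eq by simp

lemma Gbar_carrier: "Gbar k \<in> carrier_mat m m"
proof -
  have "Hshift k \<in> carrier_mat (k * m) (k * m)" unfolding Hshift_def using Tmat_carrier by simp
  from minv_carrier[OF this] show ?thesis
    unfolding Gbar_def by (meson Eblk_carrier mult_carrier_mat transpose_carrier_mat)
qed

lemma Gbar_symmetric: assumes "k < l" shows "(Gbar k)\<^sup>T = Gbar k"
  unfolding Gbar_def using pos_def_minv[OF Hshift_pos_def[OF assms]]
    by (simp add: transpose_mult' assoc_mult_mat')

lemma Delta_mu_eq:
  assumes k1: "1 \<le> k" and kl: "k < l"
  shows "Delta_mu m Gam Om \<mu> k
      = \<mu> \<cdot>\<^sub>m 1\<^sub>m m + Gam k * Gbar k * (Gam k)\<^sup>T - Gam k * minv (Piv k) * (Gam k)\<^sup>T"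
proof -
  have "blk m (minv (Tmat m Gam Om k - \<mu> \<cdot>\<^sub>m 1\<^sub>m (k * m))) k k = Gbar k"
    unfolding Gbar_def Hshift_def
    by (rule blk_eq_Eblk[OF _ k1]) (use pos_def_minv[OF Hshift_pos_def[OF kl]] in
      \<open>simp add: Hshift_def\<close>)
  thus ?thesis unfolding Delta_mu_def Om_mu_def using k1 Delta_eq_Piv[OF k1 kl] by simp
qed

lemma quad_form_minv_Piv_le:
  assumes k1: "1 \<le> k" and kl: "k < l" and z: "z \<in> carrier_mat m 1"
  shows "quad_form (minv (Piv k)) z \<le> quad_form (Gbar k) z"
proof -
  define Vk where "Vk = hcat n m V k"
  define E where "E = Eblk m k k"
  define H where "H = Hshift k"
  define Mk where "Mk = minv (Piv k)"
  define u where "u = Dir (k - 1) * (Mk * z)"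
  define c where "c = Vk\<^sup>T * u"
  have onk: "orth_upto k" and kl': "k - 1 < l" using orth_upto_below kl by auto
  have pdH: "pos_def (k * m) H" unfolding H_def by (rule Hshift_pos_def[OF kl])
  have pdD: "pos_def m (Piv k)" using Piv_pos_def[of "k - 1"] onk kl' k1 by simp
  have cMk: "Mk \<in> carrier_mat m m" "Mk\<^sup>T = Mk" using pos_def_minv[OF pdD] unfolding Mk_def by auto
  have cVk: "Vk \<in> carrier_mat n (k * m)" and cE: "E \<in> carrier_mat (k * m) m" unfolding Vk_def E_def
    by auto
  have cZ: "Dir (k - 1) \<in> carrier_mat n m" using kl by (auto intro!: Dir_carrier)
  have cu: "u \<in> carrier_mat n 1" and cc: "c \<in> carrier_mat (k * m) 1"
    unfolding u_def c_def using cZ cMk z cVk by auto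
  have "quad_form (minv H) (E * z) \<ge> 2 * (c\<^sup>T * (E * z)) $$ (0,0) - quad_form H c"
    by (rule pos_def_minv_variational[OF pdH _ cc]) (use cE z in simp)
  moreover have "(c\<^sup>T * (E * z)) $$ (0,0) = quad_form Mk z"
  proof -
    have VkE: "Vk * E = V k" unfolding Vk_def E_def
      by (rule hcat_mult_Eblk) (use kl k1 in \<open>auto intro!: V_carrier\<close>)
    have ZV: "(Dir (k - 1))\<^sup>T * V k = 1\<^sub>m m" using Dir_V[of "k - 1"] onk kl' k1 by simp
    have "c\<^sup>T * (E * z) = u\<^sup>T * ((Vk * E) * z)" unfolding c_def using cVk cu cE z
      by (simp add: transpose_mult' assoc_mult_mat')
    also have "\<dots> = (Mk * z)\<^sup>T * (((Dir (k - 1))\<^sup>T * V k) * z)" unfolding VkE u_def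
      using cZ cMk z kl V_carrier[of k] by (simp add: transpose_mult' assoc_mult_mat')
    finally show ?thesis unfolding ZV quad_form_def using cMk z
      by (simp add: transpose_mult' assoc_mult_mat')
  qed
  moreover have "quad_form H c \<le> quad_form Mk z"
  proof -
    have "Vk * c = u" unfolding c_def u_def Vk_def
      using assoc_mult_mat_subst[OF _ _ Vcat_proj_Dir[OF onk _ k1 order.refl], of "Mk * z"] kl cZ
        cMk z
      by (simp add: assoc_mult_mat')
    hence "quad_form H c = quad_form Ashift u"
      unfolding H_def Hshift_eq[OF kl] Vk_def[symmetric]
        using quad_form_mult[OF cVk cc Ashift_carrier] by simp
    also have "\<dots> \<le> quad_form A u" using quad_form_Ashift[OF cu] sq_norm_nonneg[OF cu] mu_pos by simp
    also have "quad_form A u = quad_form (Piv k) (Mk * z)"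
      unfolding u_def using quad_form_mult[OF cZ _ A, of "Mk * z"] Dir_energy[of "k - 1"] onk kl' k1
        cMk z by simp
    also have "\<dots> = quad_form Mk z"
      unfolding quad_form_def Mk_def
        using pos_def_minv[OF pdD] minv_cancel(1)[OF _ pos_def_det[OF pdD]] z
        pos_def_carrier[OF pdD] by (simp add: transpose_mult' assoc_mult_mat')
    finally show ?thesis .
  qed
  ultimately show ?thesis unfolding Gbar_def H_def[symmetric] E_def[symmetric] Mk_def[symmetric]
    using quad_form_mult[OF cE z pos_def_minv(1)[OF pdH]] by simp
qed

lemma Delta_mu_pos_def: "k < l \<Longrightarrow> pos_def m (Delta_mu m Gam Om \<mu> k)"
proof (cases "k = 0")
  case True
  have DM: "Delta_mu m Gam Om \<mu> k = \<mu> \<cdot>\<^sub>m 1\<^sub>m m" unfolding Delta_mu_def True by simp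
  show ?thesis unfolding DM pos_def_def
  proof (intro conjI ballI impI)
    fix Y :: "real mat" assume Y: "Y \<in> carrier_mat m 1" "Y \<noteq> 0\<^sub>m m 1"
    show "quad_form (\<mu> \<cdot>\<^sub>m 1\<^sub>m m) Y > 0" unfolding quad_form_smult_one[OF Y(1)]
      using mu_pos sq_norm_pos[OF Y] by simp
  qed (auto simp: transpose_smult_mat)
next
  case False
  assume kl: "k < l"
  hence k1: "1 \<le> k" using False by simp
  define G where "G = Gam k"
  define Mk where "Mk = minv (Piv k)"
  have pdD: "pos_def m (Piv k)" using Piv_pos_def[of "k - 1"] orth_upto_below kl k1
    by simp
  have cG: "G \<in> carrier_mat m m" unfolding G_def using kl by (auto intro!: Gam_carrier)
  have cMk: "Mk \<in> carrier_mat m m" "Mk\<^sup>T = Mk" using pos_def_minv[OF pdD] unfolding Mk_def by auto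
  note cGb = Gbar_carrier[of k] and Gb_sym = Gbar_symmetric[OF kl]
  have qGMG: "quad_form (G * M * G\<^sup>T) Y = quad_form M (G\<^sup>T * Y)"
    if "M \<in> carrier_mat m m" "Y \<in> carrier_mat m 1" for M Y
    using quad_form_mult[of "G\<^sup>T" m m Y M] that cG by (simp add: assoc_mult_mat')
  show ?thesis unfolding Delta_mu_eq[OF k1 kl] G_def[symmetric] Mk_def[symmetric] pos_def_def
  proof (intro conjI ballI impI)
    show "\<mu> \<cdot>\<^sub>m 1\<^sub>m m + G * Gbar k * G\<^sup>T - G * Mk * G\<^sup>T \<in> carrier_mat m m" using cG cGb cMk by simp
    show "(\<mu> \<cdot>\<^sub>m 1\<^sub>m m + G * Gbar k * G\<^sup>T - G * Mk * G\<^sup>T)\<^sup>T = \<mu> \<cdot>\<^sub>m 1\<^sub>m m + G * Gbar k * G\<^sup>T - G * Mk * G\<^sup>T"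
      using cG cGb cMk Gb_sym
      by (simp add: transpose_minus' transpose_add' transpose_smult_mat transpose_mult'
        assoc_mult_mat')
    fix Y :: "real mat" assume Y: "Y \<in> carrier_mat m 1" "Y \<noteq> 0\<^sub>m m 1"
    have z: "G\<^sup>T * Y \<in> carrier_mat m 1" using cG Y by simp
    have "quad_form (\<mu> \<cdot>\<^sub>m 1\<^sub>m m + G * Gbar k * G\<^sup>T - G * Mk * G\<^sup>T) Y
        = \<mu> * sq_norm Y + quad_form (Gbar k) (G\<^sup>T * Y) - quad_form Mk (G\<^sup>T * Y)"
      using quad_form_minus[of _ m "G * Mk * G\<^sup>T" Y] quad_form_add[of _ m "G * Gbar k * G\<^sup>T" Y]
        quad_form_smult_one[OF Y(1)] qGMG[OF cGb Y(1)] qGMG[OF cMk(1) Y(1)] cG cGb cMk Y by simp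
    also have "\<dots> \<ge> \<mu> * sq_norm Y"
      using quad_form_minv_Piv_le[OF k1 kl z] unfolding Mk_def G_def by simp
    finally show "quad_form (\<mu> \<cdot>\<^sub>m 1\<^sub>m m + G * Gbar k * G\<^sup>T - G * Mk * G\<^sup>T) Y > 0"
      using mu_pos sq_norm_pos[OF Y] by (smt (verit) mult_pos_pos)
  qed
qed

lemma V_Suc_Ashift_Vcat:
  assumes kl: "k < l"
  shows "(V (k + 1))\<^sup>T * Ashift * hcat n m V k = Gam k * (Eblk m k k)\<^sup>T"
proof -
  have on: "orth_upto (k + 1)" using orth_upto_below kl by simp
  have c: "V (k + 1) \<in> carrier_mat n m" "Gam k \<in> carrier_mat m m"
    using kl by (auto intro!: V_carrier Gam_carrier)
  have "(V (k + 1))\<^sup>T * A * hcat n m V k = ((hcat n m V k)\<^sup>T * (A * V (k + 1)))\<^sup>T"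
    using c A Asym by (simp add: transpose_mult' assoc_mult_mat')
  moreover have "(V (k + 1))\<^sup>T * hcat n m V k = ((hcat n m V k)\<^sup>T * V (k + 1))\<^sup>T"
    using c by (simp add: transpose_mult')
  ultimately show ?thesis
    unfolding Ashift_def Vcat_transpose_A_V_Suc[OF on kl] Vcat_transpose_V_Suc[OF on kl]
    using c A by (simp add: mat_distrib_dims assoc_mult_mat' right_minus_zero_mat')
qed

lemma Piv_minus_Delta_mu_eq:
  assumes k1: "1 \<le> k" and kl: "k < l"
  shows "Piv (k + 1) - Delta_mu m Gam Om \<mu> k
    = (V (k + 1))\<^sup>T * Ashift * V (k + 1) - Gam k * Gbar k * (Gam k)\<^sup>T"
proof -
  have cV1: "V (k + 1) \<in> carrier_mat n m" and V1V1: "(V (k + 1))\<^sup>T * V (k + 1) = 1\<^sub>m m"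
    using kl V_carrier[of "k + 1"] V_orthonormal[of "k + 1"] by auto
  have "Piv (k + 1) = OmA (k + 1) - Gam k * minv (Piv k) * (Gam k)\<^sup>T" using Piv_Suc[of k] k1 by simp
  moreover have "(V (k + 1))\<^sup>T * Ashift * V (k + 1) = OmA (k + 1) - \<mu> \<cdot>\<^sub>m 1\<^sub>m m"
    unfolding OmA_def by (rule orthonormal_compress_Ashift[OF cV1 V1V1])
  moreover have "a - c - (b + d - c) = a - b - d"
    if "a \<in> carrier_mat m m" "b \<in> carrier_mat m m" "c \<in> carrier_mat m m" "d \<in> carrier_mat m m"
    for a b c d :: "real mat" using that by (intro eq_matI) auto
  ultimately show ?thesis unfolding Delta_mu_eq[OF k1 kl]
    using Gam_carrier[of k] Gbar_carrier[of k] minv_carrier[OF Piv_carrier[of k]]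
      OmA_carrier[of "k + 1"] kl k1
    by simp
qed

definition defect_vec where
  "defect_vec k Y
      = V (k + 1) * Y - hcat n m V k * (minv (Hshift k) * (Eblk m k k * ((Gam k)\<^sup>T * Y)))"

lemma V_Suc_transpose_defect_vec:
  assumes kl: "k < l" and Y: "Y \<in> carrier_mat m 1"
  shows "(V (k + 1))\<^sup>T * defect_vec k Y = Y"
proof -
  define c where "c = minv (Hshift k) * (Eblk m k k * ((Gam k)\<^sup>T * Y))"
  have cV1: "V (k + 1) \<in> carrier_mat n m" and V1V1: "(V (k + 1))\<^sup>T * V (k + 1) = 1\<^sub>m m"
    using kl V_carrier[of "k + 1"] V_orthonormal[of "k + 1"] by auto
  have cc: "c \<in> carrier_mat (k * m) 1"
    unfolding c_def using pos_def_minv(1)[OF Hshift_pos_def[OF kl]] Gam_carrier[OF kl] Y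
    by (meson Eblk_carrier mult_carrier_mat transpose_carrier_mat)
  have V1_Vk: "(V (k + 1))\<^sup>T * hcat n m V k = 0\<^sub>m m (k * m)"
    using arg_cong[OF Vcat_transpose_V_Suc[OF orth_upto_below kl], of transpose_mat] kl cV1
    by (simp add: transpose_mult')
  have "(V (k + 1))\<^sup>T * defect_vec k Y
      = ((V (k + 1))\<^sup>T * V (k + 1)) * Y - ((V (k + 1))\<^sup>T * hcat n m V k) * c"
    unfolding defect_vec_def c_def[symmetric] using cV1 Y cc
    by (subst mult_minus_distrib_mat[of _ m n]) (auto simp: assoc_mult_mat')
  thus ?thesis unfolding V1V1 V1_Vk using Y carrier_matD[OF cc] by (simp add: right_minus_zero_mat')
qed

lemma quad_form_defect_vec:
  assumes kl: "k < l" and Y: "Y \<in> carrier_mat m 1"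
  shows "quad_form Ashift (defect_vec k Y)
    = quad_form ((V (k + 1))\<^sup>T * Ashift * V (k + 1) - Gam k * Gbar k * (Gam k)\<^sup>T) Y"
proof -
  define Vk where "Vk = hcat n m V k"
  define E where "E = Eblk m k k"
  define G where "G = Gam k"
  define Hi where "Hi = minv (Hshift k)"
  define b where "b = E * (G\<^sup>T * Y)"
  have pdH: "pos_def (k * m) (Hshift k)" by (rule Hshift_pos_def[OF kl])
  have cHi: "Hi \<in> carrier_mat (k * m) (k * m)" using pos_def_minv[OF pdH] unfolding Hi_def by auto
  have cV1: "V (k + 1) \<in> carrier_mat n m" using kl V_carrier[of "k + 1"] by auto
  have cVk: "Vk \<in> carrier_mat n (k * m)" and cE: "E \<in> carrier_mat (k * m) m" unfolding Vk_def E_def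
    by auto
  have cG: "G \<in> carrier_mat m m" unfolding G_def using kl by (auto intro!: Gam_carrier)
  have cb: "b \<in> carrier_mat (k * m) 1" unfolding b_def using cE cG Y by simp
  have cc: "Hi * b \<in> carrier_mat (k * m) 1" using cHi cb by simp
  have As_sym: "Ashift\<^sup>T = Ashift" using Ashift_pos_def pos_def_symmetric by blast
  have "quad_form Ashift (defect_vec k Y) = quad_form Ashift (V (k + 1) * Y)
      - 2 * bilin_form Ashift (V (k + 1) * Y) (Vk * (Hi * b)) + quad_form Ashift (Vk * (Hi * b))"
    unfolding defect_vec_def Vk_def[symmetric] Hi_def[symmetric] E_def[symmetric] G_def[symmetric]
      b_def[symmetric]
    by (rule quad_form_diff_expand[OF Ashift_carrier As_sym]) (use cV1 Y cVk cc in auto)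
  also have "bilin_form Ashift (V (k + 1) * Y) (Vk * (Hi * b)) = bilin_form (G * E\<^sup>T) Y (Hi * b)"
    using bilin_form_mult[OF cV1 cVk Y cc Ashift_carrier] V_Suc_Ashift_Vcat[OF kl]
    unfolding Vk_def[symmetric] E_def[symmetric] G_def[symmetric] by simp
  also have "\<dots> = quad_form Hi b"
  proof -
    have "Y\<^sup>T * (G * E\<^sup>T) = b\<^sup>T" unfolding b_def using cG cE Y
      by (simp add: transpose_mult' assoc_mult_mat')
    thus ?thesis unfolding bilin_form_def quad_form_def using cG cE cHi cb Y
      by (simp add: assoc_mult_mat')
  qed
  also have "quad_form Ashift (Vk * (Hi * b)) = quad_form Hi b"
    using quad_form_mult[OF cVk cc Ashift_carrier]
      quad_form_minv_mult[OF _ pos_def_det[OF pdH] _ cb]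
      pdH Hshift_eq[OF kl] unfolding Vk_def[symmetric] Hi_def pos_def_def by simp
  also have "quad_form Ashift (V (k + 1) * Y)
      = quad_form ((V (k + 1))\<^sup>T * Ashift * V (k + 1) - G * Gbar k * G\<^sup>T) Y + quad_form Hi b"
    using quad_form_mult[OF cV1 Y Ashift_carrier] quad_form_minus[of _ m "G * Gbar k * G\<^sup>T" Y]
      quad_form_mult[of "G\<^sup>T" m m Y "Gbar k"] quad_form_mult[OF cE _ cHi, of "G\<^sup>T * Y"]
      cV1 cG Y Gbar_carrier[of k] Ashift_carrier
    unfolding b_def Gbar_def Hi_def[symmetric] E_def[symmetric] by (simp add: assoc_mult_mat')
  finally show ?thesis unfolding G_def by simp
qed

lemma Piv_minus_Delta_mu_pos_def: "k < l \<Longrightarrow> pos_def m (Piv (k + 1) - Delta_mu m Gam Om \<mu> k)"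
proof (cases "k = 0")
  case True
  have V1: "V 1 \<in> carrier_mat n m" "(V 1)\<^sup>T * V 1 = 1\<^sub>m m"
    using l1 V_carrier[of 1] V_orthonormal[of 1] by auto
  have "Piv 1 - \<mu> \<cdot>\<^sub>m 1\<^sub>m m = (V 1)\<^sup>T * Ashift * V 1"
    using orthonormal_compress_Ashift[OF V1] by (simp add: Piv_Suc OmA_def)
  moreover have "pos_def m ((V 1)\<^sup>T * Ashift * V 1)"
    by (rule pos_def_congruence[OF Ashift_pos_def V1(1) _ V1(2)]) (use V1 in simp)
  ultimately show ?thesis using True by (simp add: Delta_mu_def)
next
  case False
  assume kl: "k < l"
  hence k1: "1 \<le> k" using False by simp
  have cV1: "V (k + 1) \<in> carrier_mat n m" using kl V_carrier[of "k + 1"] by auto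
  have cG: "Gam k \<in> carrier_mat m m" using kl by (auto intro!: Gam_carrier)
  have As_sym: "Ashift\<^sup>T = Ashift" using Ashift_pos_def pos_def_symmetric by blast
  show ?thesis unfolding Piv_minus_Delta_mu_eq[OF k1 kl] pos_def_def
  proof (intro conjI ballI impI)
    show "(V (k + 1))\<^sup>T * Ashift * V (k + 1) - Gam k * Gbar k * (Gam k)\<^sup>T \<in> carrier_mat m m"
      using cV1 cG Gbar_carrier[of k] Ashift_carrier by simp
    show "((V (k + 1))\<^sup>T * Ashift * V (k + 1) - Gam k * Gbar k * (Gam k)\<^sup>T)\<^sup>T
      = (V (k + 1))\<^sup>T * Ashift * V (k + 1) - Gam k * Gbar k * (Gam k)\<^sup>T"
      using cV1 cG Gbar_carrier[of k] Ashift_carrier As_sym Gbar_symmetric[OF kl]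
      by (simp add: transpose_minus' transpose_mult' assoc_mult_mat')
    fix Y :: "real mat" assume Y: "Y \<in> carrier_mat m 1" "Y \<noteq> 0\<^sub>m m 1"
    have "minv (Hshift k) * (Eblk m k k * ((Gam k)\<^sup>T * Y)) \<in> carrier_mat (k * m) 1"
      using pos_def_minv(1)[OF Hshift_pos_def[OF kl]] cG Y(1)
      by (meson Eblk_carrier mult_carrier_mat transpose_carrier_mat)
    hence "defect_vec k Y \<in> carrier_mat n 1"
      unfolding defect_vec_def by (meson hcat_carrier mult_carrier_mat minus_carrier_mat)
    moreover have "defect_vec k Y \<noteq> 0\<^sub>m n 1" using V_Suc_transpose_defect_vec[OF kl Y(1)] Y cV1
      by auto
    ultimately have "quad_form Ashift (defect_vec k Y) > 0" using Ashift_pos_def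
      unfolding pos_def_def by simp
    thus "quad_form ((V (k + 1))\<^sup>T * Ashift * V (k + 1) - Gam k * Gbar k * (Gam k)\<^sup>T) Y > 0"
      unfolding quad_form_defect_vec[OF kl Y(1)] .
  qed
qed

lemma Theta_mu_minus_bcgTheta_pos_def:
  assumes kl: "k < l"
  shows "pos_def m (Theta_mu A B X0 m Gam Om \<mu> k - bcgTheta A B X0 k)"
proof -
  define X where "X = Delta_mu m Gam Om \<mu> k"
  define S where "S = Piv (k + 1) - X"
  define Ps where "Ps = Coef k"
  have pX: "pos_def m X" and pS: "pos_def m S"
    unfolding X_def S_def using Delta_mu_pos_def[OF kl] Piv_minus_Delta_mu_pos_def[OF kl] by auto
  have cX: "X \<in> carrier_mat m m" using pX pos_def_carrier by auto
  have cPs: "Ps \<in> carrier_mat m m" and dPs: "det Ps \<noteq> 0"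
    using Coef_carrier[OF kl] bcg_lanczos_repr[OF kl] unfolding Ps_def bcg_repr_def by auto
  have "Piv (k + 1) = X + S" unfolding S_def using cX Piv_carrier[of "k + 1"] kl
    by (intro eq_matI) auto
  hence "Theta_mu A B X0 m Gam Om \<mu> k - bcgTheta A B X0 k = Ps\<^sup>T * (minv X - minv (X + S)) * Ps"
    unfolding Theta_mu_eq[OF kl cX[unfolded X_def]] bcgTheta_eq[OF kl] X_def[symmetric]
      Ps_def[symmetric]
    using cPs minv_carrier[OF cX] minv_carrier[of "X + S" m] pos_def_carrier[OF pS] cX
    by (simp add: mat_distrib_dims assoc_mult_mat')
  also have "pos_def m \<dots>"
    by (rule pos_def_congruence[OF pos_def_minv_diff[OF pX pS] cPs minv_carrier[OF cPs]])
      (use minv_inverse(3)[OF cPs dPs] in simp)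
  finally show ?thesis .
qed

end

theorem lemma6:
  fixes n m l :: nat and A B X0 :: "real mat" and \<mu> :: real
    and V Gam Om :: "nat \<Rightarrow> real mat"
  assumes A_spd: "spd n A"
    and B_dim: "B \<in> carrier_mat n m" and X0_dim: "X0 \<in> carrier_mat n m"
    and krylov: "\<forall>j. 1 \<le> j \<and> j \<le> l \<longrightarrow> full_col_rank (krylov_mat n m A (B - A * X0) j)"
    and lanczos: "lanczos n m A (B - A * X0) l V Gam Om"
    and mu_pos: "0 < \<mu>" and mu_lt: "\<mu> < lambda_min A"
    and l_ge: "1 \<le> l"
    and R_rank: "\<forall>k < l. full_col_rank (bcgR A B X0 k)"
  shows "\<forall>k < l. spd m (Delta_mu m Gam Om \<mu> k) \<and>
                 spd m (Theta_mu A B X0 m Gam Om \<mu> k - bcgTheta A B X0 k)"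
proof -
  interpret bcg_lanczos_shift n m l A B X0 V Gam Om \<mu>
    by unfold_locales
      (use A_spd lanczos l_ge R_rank mu_pos mu_lt in \<open>auto simp: spd_def spd_iff_pos_def[symmetric]\<close>)
  show ?thesis using Delta_mu_pos_def Theta_mu_minus_bcgTheta_pos_def spd_iff_pos_def by auto
qed

end
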